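(* Let $r\in\{1,\dots,n\}$. A run $R$ of an $n$-DPDA is an $r$-return if and only if at least one of the following holds: (1) $|R|=1$ and the only step of $R$ performs $\mathsf{pop}^r$; (2) the first step of $R$ is a read, or performs $\mathsf{pop}^k$ for some $k<r$, or performs $\mathsf{push}^k_\gamma$ for some $k\ne r$, and $R[1,|R|]$ is an $r$-return; (3) the first step of $R$ performs $\mathsf{push}^k_\gamma$ for some $k\ge r$, and $R[1,|R|]=S\circ T$ where $S$ is a $k$-return and $T$ is an $r$-return.
   Context: Stacks: fix order $n\ge1$, finite stack alphabet $\Gamma$. A $0$-stack is $(\gamma,x)$ with $\gamma\in\Gamma$, $x=(x_n,\dots,x_1)$ a vector of $n$ positive integers (position). For $k\in\{1,\dots,n\}$ a $k$-stack is a finite list $[s_1,\dots,s_m]$ ($m\ge0$) of nonempty $(k-1)$-stacks such that for some $x_n,\dots,x_{k+1}$, every position in $s_i$ has the form $(x_n,\dots,x_{k+1},i,y_{k-1},\dots,y_1)$. The top is at the right; $s^k:s^{k-1}$ appends at the top (right-associative); for $s^r=t^r:t^{r-1}:\dots:t^k$, $\mathrm{top}^k(s^r)=t^k$. Equality of stacks includes positions. For $k<n$, $\mathsf p_{+1}(s^k)$ adds $1$ to the $(n-k)$-th coordinate of all positions. Operations of order $k\ge1$: $\mathsf{pop}^k(s^r:\dots:s^k:s^{k-1})=s^r:\dots:s^k$, defined only if the topmost $k$-stack has at least two $(k-1)$-stacks; $\mathsf{push}^k_\gamma(s^r:\dots:s^0)=s^r:\dots:s^{k+1}:(s^k:\dots:s^0):\mathsf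 p_{+1}(s^{k-1}:\dots:s^1:(\gamma,x))$ where $s^0=(\gamma',x)$. An $n$-DPDA has transitions determined by state and topmost stack symbol, each either $\mathrm{read}(\vec q)$ ($\vec q:A\to Q$ injective; leads to $(\vec q(a),s)$, reading $a$) or $(q,op)$ with $op$ a stack operation of order $\le n$ (leads to $(q,op(s))$ if defined). Configurations are (state, nonempty $n$-stack). A run is a finite sequence $R=c_0,\dots,c_m$ with each $c_i$ a successor of $c_{i-1}$; $R(i)=c_i$, $|R|=m$, $R[i,j]=c_i,\dots,c_j$; $\circ$ is concatenation. $\mathrm{top}^k(c)$, $\mathsf{pop}^k(c)$ refer to the stack of $c$. History: for a run $R$ and a $0$-stack $s^0$ of $R(|R|)$, $\mathrm{hist}(R,s^0)$ is a $0$-stack of $R(0)$: if $|R|=0$ it is $s^0$; if $R=S\circ T$, $|T|=1$, and the last step is a read or a $\mathsf{pop}$, or a $\mathsf{push}^r_\gamma$ with $s^0$ not in the topmost $(r-1)$-stack of $R(|R|)$, it is $\mathrm{hist}(S,s^0)$; if the last step is $\mathsf{push}^r_\gamma$ and $s^0$ is in the topmost $(r-1)$-stack of $R(|R|)$, it is $\mathrm{hist}(S,t^0)$ with $t^0$ equal to $s^0$ with the $(n-r+1)$-th position coordinate decreased by $1$. For a $k$-stack $s^k$ of $R(|R|)$, $k\ge1$, $\mathrm{hist}(R,s^k)$ is the $k$-stack of $R(0)$ containing $\mathrm{hist}(R,s^0)$ for all $0$-stacks $s^0$ of $s^k$. For $k\in\{0,\dots,n\}$, $R$ is $k$-upper if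 $\mathrm{hist}(R,\mathrm{top}^k(R(|R|)))=\mathrm{top}^k(R(0))$. For $k\in\{1,\dots,n\}$, $R$ is a $k$-return if $\mathrm{hist}(R,\mathrm{top}^{k-1}(R(|R|)))=\mathrm{top}^{k-1}(\mathsf{pop}^k(R(0)))$ and $R[i,|R|]$ is not $(k-1)$-upper for every $i\in\{0,\dots,|R|-1\}$. *)

theory Defs
  imports Main
begin

text \<open>A stack is a tree: a 0-stack is a symbol, a k-stack
 (k \<ge> 1) is a list of nonempty (k-1)-stacks, the top being the LAST element.
 Inside an n-stack the position of every 0-stack (x_n,...,x_1) is exactly its
 path of 1-based indices (x_n is the index in the outermost list), so positions
 are not stored but computed; a position is a nat list [x_n, ..., x_1].\<close>

datatype 'g stk = Sym 'g | Lst "'g stk list"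

fun is_stack :: "nat \<Rightarrow> 'g stk \<Rightarrow> bool" where
  "is_stack 0 (Sym g) = True"
| "is_stack (Suc k) (Lst xs) = (\<forall>x\<in>set xs. is_stack k x \<and> x \<noteq> Lst [])"
| "is_stack _ _ = False"

fun positions :: "'g stk \<Rightarrow> nat list set"
and positions_list :: "nat \<Rightarrow> 'g stk list \<Rightarrow> nat list set" where
  "positions (Sym g) = {[]}"
| "positions (Lst xs) = positions_list 1 xs"
| "positions_list i [] = {}"
| "positions_list i (x # xs) = ((#) i ` positions x) \<union> positions_list (Suc i) xs"

lemma size_last_less[termination_simp]:
  "xs \<noteq> [] \<Longrightarrow> size (last xs) < Suc (size_list size xs)"
  by (induct xs) auto

fun toppath :: "'g stk \<Rightarrow> nat list" where
  "toppath (Sym g) = []"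
| "toppath (Lst xs) = (if xs = [] then [] else length xs # toppath (last xs))"

fun topsym :: "'g stk \<Rightarrow> 'g" where
  "topsym (Sym g) = g"
| "topsym (Lst xs) = (if xs = [] then undefined else topsym (last xs))"

fun settop0 :: "'g \<Rightarrow> 'g stk \<Rightarrow> 'g stk" where
  "settop0 g (Sym _) = Sym g"
| "settop0 g (Lst xs) = (if xs = [] then Lst [] else Lst (butlast xs @ [settop0 g (last xs)]))"

text \<open>push / pop acting at depth d below the outermost level, i.e. on the
 topmost (n-d)-stack of an n-stack.\<close>
fun push_d :: "nat \<Rightarrow> 'g \<Rightarrow> 'g stk \<Rightarrow> 'g stk" where
  "push_d 0 g (Lst xs) = (if xs = [] then Lst [] else Lst (xs @ [settop0 g (last xs)]))"
| "push_d (Suc d) g (Lst xs) = (if xs = [] then Lst [] else Lst (butlast xs @ [push_d d g (last xs)]))"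
| "push_d _ _ (Sym x) = Sym x"

fun pop_d :: "nat \<Rightarrow> 'g stk \<Rightarrow> 'g stk option" where
  "pop_d 0 (Lst xs) = (if 2 \<le> length xs then Some (Lst (butlast xs)) else None)"
| "pop_d (Suc d) (Lst xs) =
     (if xs = [] then None else map_option (\<lambda>y. Lst (butlast xs @ [y])) (pop_d d (last xs)))"
| "pop_d _ (Sym x) = None"

datatype 'g op = Pop nat | Push nat 'g

fun op_order :: "'g op \<Rightarrow> nat" where
  "op_order (Pop k) = k"
| "op_order (Push k g) = k"

fun apply_op :: "nat \<Rightarrow> 'g op \<Rightarrow> 'g stk \<Rightarrow> 'g stk option" where
  "apply_op n (Pop k) s = pop_d (n - k) s"
| "apply_op n (Push k g) s = Some (push_d (n - k) g s)"

datatype ('q, 'g, 'a) trans = Read "'a \<Rightarrow> 'q" | Op 'q "'g op"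

type_synonym ('q, 'g, 'a) delta = "'q \<Rightarrow> 'g \<Rightarrow> ('q, 'g, 'a) trans option"

type_synonym ('q, 'g) config = "'q \<times> 'g stk"

definition is_dpda :: "nat \<Rightarrow> ('q, 'g, 'a) delta \<Rightarrow> bool" where
  "is_dpda n \<delta> \<longleftrightarrow> 1 \<le> n \<and>
     (\<forall>q g f. \<delta> q g = Some (Read f) \<longrightarrow> inj f) \<and>
     (\<forall>q g q' p. \<delta> q g = Some (Op q' p) \<longrightarrow> 1 \<le> op_order p \<and> op_order p \<le> n)"

definition wf_config :: "nat \<Rightarrow> ('q, 'g) config \<Rightarrow> bool" where
  "wf_config n c \<longleftrightarrow> is_stack n (snd c) \<and> snd c \<noteq> Lst []"

definition trans_at :: "('q, 'g, 'a) delta \<Rightarrow> ('q, 'g) config \<Rightarrow> ('q, 'g, 'a) trans option" where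
  "trans_at \<delta> c = \<delta> (fst c) (topsym (snd c))"

definition succ :: "nat \<Rightarrow> ('q, 'g, 'a) delta \<Rightarrow> ('q, 'g) config \<Rightarrow> ('q, 'g) config \<Rightarrow> bool" where
  "succ n \<delta> c c' \<longleftrightarrow> (case trans_at \<delta> c of
      None \<Rightarrow> False
    | Some (Read f) \<Rightarrow> (\<exists>a. c' = (f a, snd c))
    | Some (Op q p) \<Rightarrow> fst c' = q \<and> apply_op n p (snd c) = Some (snd c'))"

text \<open>A run R = c_0,...,c_m is the list [c_0,...,c_m]; |R| = length R - 1,
 R(i) = R!i, R[i,|R|] = drop i R.\<close>
definition is_run :: "nat \<Rightarrow> ('q, 'g, 'a) delta \<Rightarrow> ('q, 'g) config list \<Rightarrow> bool" where
  "is_run n \<delta> R \<longleftrightarrow> R \<noteq> [] \<and> (\<forall>c\<in>set R. wf_config n c) \<and>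
     (\<forall>i. Suc i < length R \<longrightarrow> succ n \<delta> (R ! i) (R ! Suc i))"

definition performs :: "('q, 'g, 'a) delta \<Rightarrow> ('q, 'g) config \<Rightarrow> 'g op \<Rightarrow> bool" where
  "performs \<delta> c p \<longleftrightarrow> (\<exists>q. trans_at \<delta> c = Some (Op q p))"

definition is_read :: "('q, 'g, 'a) delta \<Rightarrow> ('q, 'g) config \<Rightarrow> bool" where
  "is_read \<delta> c \<longleftrightarrow> (\<exists>f. trans_at \<delta> c = Some (Read f))"

definition hist_step :: "nat \<Rightarrow> ('q, 'g, 'a) delta \<Rightarrow> ('q, 'g) config \<Rightarrow> ('q, 'g) config \<Rightarrow> nat list \<Rightarrow> nat list" where
  "hist_step n \<delta> c c' x = (case trans_at \<delta> c of
      Some (Op q (Push r g)) \<Rightarrow>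
        (if take (n - r + 1) x = take (n - r + 1) (toppath (snd c'))
         then x[n - r := x ! (n - r) - 1] else x)
    | _ \<Rightarrow> x)"

text \<open>hist_rev works on the reversed run: hist(S o T, s) = hist(S, back(T, s)) for |T| = 1.\<close>
fun hist_rev :: "nat \<Rightarrow> ('q, 'g, 'a) delta \<Rightarrow> ('q, 'g) config list \<Rightarrow> nat list \<Rightarrow> nat list" where
  "hist_rev n \<delta> (c' # c # cs) x = hist_rev n \<delta> (c # cs) (hist_step n \<delta> c c' x)"
| "hist_rev n \<delta> _ x = x"

definition hist0 :: "nat \<Rightarrow> ('q, 'g, 'a) delta \<Rightarrow> ('q, 'g) config list \<Rightarrow> nat list \<Rightarrow> nat list" where
  "hist0 n \<delta> R x = hist_rev n \<delta> (rev R) x"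

text \<open>A k-stack of an n-stack is identified by the common prefix (length n-k) of the
 positions of its 0-stacks. hist_stk R k P is the k-stack of R(0) containing the
 histories of all 0-stacks of the k-stack P of R(|R|).\<close>
definition hist_stk :: "nat \<Rightarrow> ('q, 'g, 'a) delta \<Rightarrow> ('q, 'g) config list \<Rightarrow> nat \<Rightarrow> nat list \<Rightarrow> nat list" where
  "hist_stk n \<delta> R k P = (THE P'. (\<exists>x\<in>positions (snd (hd R)). take (n - k) x = P') \<and>
      (\<forall>x\<in>positions (snd (last R)). take (n - k) x = P \<longrightarrow> take (n - k) (hist0 n \<delta> R x) = P'))"

definition top_id :: "nat \<Rightarrow> nat \<Rightarrow> 'g stk \<Rightarrow> nat list" where
  "top_id n k s = take (n - k) (toppath s)"

definition upper :: "nat \<Rightarrow> ('q, 'g, 'a) delta \<Rightarrow> nat \<Rightarrow> ('q, 'g) config list \<Rightarrow> bool" where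
  "upper n \<delta> k R \<longleftrightarrow> hist_stk n \<delta> R k (top_id n k (snd (last R))) = top_id n k (snd (hd R))"

definition is_return :: "nat \<Rightarrow> ('q, 'g, 'a) delta \<Rightarrow> nat \<Rightarrow> ('q, 'g) config list \<Rightarrow> bool" where
  "is_return n \<delta> k R \<longleftrightarrow>
     (\<exists>s'. apply_op n (Pop k) (snd (hd R)) = Some s' \<and>
        hist_stk n \<delta> R (k - 1) (top_id n (k - 1) (snd (last R))) = top_id n (k - 1) s') \<and>
     (\<forall>i < length R - 1. \<not> upper n \<delta> (k - 1) (drop i R))"

end

theory Submission
  imports Defs
begin

text \<open>Positions are index paths, and the history of a position is computed backwards through the
  run: a \<open>push\<^sup>k\<close> sends positions inside the freshly created \<open>(k - 1)\<close>-stack back to the copied one,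
  all other steps fix positions. With \<open>d = n - r\<close>, the \<open>(r - 1)\<close>-stack containing a position is its
  prefix of length \<open>d + 1\<close>, so being an \<open>r\<close>-return is a statement about that prefix of the history
  of the final top.

  The characterisation follows by analysing the first step. Steps of order below \<open>r\<close> do not touch
  these prefixes, \<open>pop\<^sup>r\<close> is a return by itself and \<open>pop\<^sup>k\<close> with \<open>k > r\<close> destroys the target. After a
  \<open>push\<^sup>k\<close> with \<open>k \<ge> r\<close> the key invariant is that, as long as the history of a position avoids the
  topmost \<open>(k - 1)\<close>-stack, the positions agreeing with it in the first \<open>n - k\<close> coordinates travel
  along with it. Hence cutting the run where the history of the final top first comes back to the
  \<open>(k - 1)\<close>-stack created by the push yields a \<open>k\<close>-return followed by an \<open>r\<close>-return, and
  conversely such a pair of returns composes to an \<open>r\<close>-return.\<close>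

lemma nth_last_index: "xs \<noteq> [] \<Longrightarrow> xs ! (length xs - Suc 0) = last xs"
  by (simp add: last_conv_nth)

lemma nth_butlast_snoc: "xs \<noteq> [] \<Longrightarrow> i < length xs \<Longrightarrow>
  (butlast xs @ [a]) ! i = (if i = length xs - 1 then a else xs ! i)"
  by (auto simp: nth_append nth_butlast)

lemma take_eq_take_iff_nth: "m \<le> length a \<Longrightarrow> m \<le> length b \<Longrightarrow> (take m a = take m b) = (\<forall>i<m. a ! i = b ! i)"
  by (auto simp: list_eq_iff_nth_eq)

lemma take_Suc_eq_snoc_iff: "Suc d \<le> length a \<Longrightarrow> d \<le> length b \<Longrightarrow>
   (take (Suc d) a = take d b @ [v]) = ((\<forall>i<d. a ! i = b ! i) \<and> a ! d = v)"
  by (auto simp: list_eq_iff_nth_eq nth_append take_Suc_conv_app_nth less_Suc_eq)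

lemma take_Suc_eq_take_Suc_iff: "Suc m \<le> length a \<Longrightarrow> Suc m \<le> length b \<Longrightarrow>
  (take (Suc m) a = take (Suc m) b) = (\<forall>i\<le>m. a ! i = b ! i)"
  using take_eq_take_iff_nth[of "Suc m" a b] by (auto simp: less_Suc_eq_le)

lemma take_update_append_drop:
  assumes "i < d" "d \<le> length ys" "take d xs = take d ys"
  shows "take d (xs[i := f (xs ! i)]) @ drop d ys = ys[i := f (ys ! i)]"
proof -
  have "xs ! i = ys ! i" using assms by (metis nth_take)
  then have "take d (xs[i := f (xs ! i)]) = (take d ys)[i := f (ys ! i)]"
    using assms by (simp add: take_update_swap)
  then show ?thesis
    using list_update_append1[of i "take d ys" "drop d ys" "f (ys ! i)"] assms by simp
qed

lemma take_Suc_decr_neq: "d < length (x :: nat list) \<Longrightarrow> 0 < x ! d \<Longrightarrow> take d x @ [x ! d - 1] \<noteq> take (Suc d) x"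
proof
  assume a: "d < length x" "0 < x ! d" "take d x @ [x ! d - 1] = take (Suc d) x"
  then have "x ! d - 1 = x ! d" by (simp add: take_Suc_conv_app_nth)
  with a(2) show False by (cases "x ! d") auto
qed

lemma nat_first_index:
  fixes P :: "nat \<Rightarrow> bool"
  assumes "P b" "a \<le> b"
  obtains j where "a \<le> j" "j \<le> b" "P j" "\<And>i. a \<le> i \<Longrightarrow> i < j \<Longrightarrow> \<not> P i"
proof -
  obtain j where "j \<le> b" "\<forall>i<j. \<not> (a \<le> i \<and> P i)" "a \<le> j \<and> P j"
    using ex_least_nat_le[of "\<lambda>i. a \<le> i \<and> P i" b] assms by blast
  then show thesis using that by blast
qed

lemma nat_last_index:
  fixes P :: "nat \<Rightarrow> bool"
  assumes "P a" "a \<le> m"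
  obtains s where "a \<le> s" "s \<le> m" "P s" "\<And>i. s < i \<Longrightarrow> i \<le> m \<Longrightarrow> \<not> P i"
proof -
  let ?Q = "\<lambda>i. i \<le> m \<and> P i"
  have "?Q (Greatest ?Q)" "a \<le> Greatest ?Q"
    using GreatestI_nat[of ?Q a m] Greatest_le_nat[of ?Q a m] assms by auto
  moreover have "\<not> P i" if "Greatest ?Q < i" "i \<le> m" for i
    using Greatest_le_nat[of ?Q i m] that by auto
  ultimately show thesis using that by auto
qed

section \<open>Positions and substacks\<close>

fun valid_pos :: "'g stk \<Rightarrow> nat list \<Rightarrow> bool" where
  "valid_pos (Sym g) [] = True"
| "valid_pos (Lst xs) (i # is) = (0 < i \<and> i \<le> length xs \<and> valid_pos (xs ! (i - 1)) is)"
| "valid_pos _ _ = False"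

fun substack :: "'g stk \<Rightarrow> nat list \<Rightarrow> 'g stk" where
  "substack s [] = s"
| "substack (Lst xs) (i # is) = substack (xs ! (i - 1)) is"
| "substack (Sym g) (i # is) = Sym g"

lemma positions_iff_valid_pos:
  fixes s :: "'g stk" and xs :: "'g stk list"
  shows "z \<in> positions s \<longleftrightarrow> valid_pos s z"
  "z \<in> positions_list j xs \<longleftrightarrow> (\<exists>i y. z = i # y \<and> j \<le> i \<and> i < j + length xs \<and> valid_pos (xs ! (i - j)) y)"
proof (induction s and j xs arbitrary: z and z rule: positions_positions_list.induct)
  case (1 g) then show ?case by (cases z) auto
next
  case (2 xs) then show ?case by (cases z) auto
next
  case (3 i) then show ?case by auto
next
  case (4 i x xs)
  show ?case
  proof
    assume "z \<in> positions_list i (x # xs)"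
    then consider "z \<in> (#) i ` positions x" | "z \<in> positions_list (Suc i) xs" by auto
    then show "\<exists>ia y. z = ia # y \<and> i \<le> ia \<and> ia < i + length (x # xs) \<and> valid_pos ((x # xs) ! (ia - i)) y"
    proof cases
      case 1 then show ?thesis using 4 by auto
    next
      case 2
      then obtain ia y where h: "z = ia # y" "Suc i \<le> ia" "ia < Suc i + length xs" "valid_pos (xs ! (ia - Suc i)) y"
        using 4 by blast
      then have "(x # xs) ! (ia - i) = xs ! (ia - Suc i)"
        by (metis Suc_diff_Suc Suc_le_lessD nth_Cons_Suc)
      then show ?thesis using h by auto
    qed
  next
    assume "\<exists>ia y. z = ia # y \<and> i \<le> ia \<and> ia < i + length (x # xs) \<and> valid_pos ((x # xs) ! (ia - i)) y"
    then obtain ia y where h: "z = ia # y" "i \<le> ia" "ia < i + length (x # xs)" "valid_pos ((x # xs) ! (ia - i)) y" by blast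
    show "z \<in> positions_list i (x # xs)"
    proof (cases "ia = i")
      case True then show ?thesis using h 4 by auto
    next
      case False
      then have "ia - i = Suc (ia - Suc i)" using h by auto
      then show ?thesis using h 4 False by auto
    qed
  qed
qed

definition proper_stack :: "nat \<Rightarrow> 'g stk \<Rightarrow> bool" where
  "proper_stack k s \<longleftrightarrow> is_stack k s \<and> s \<noteq> Lst []"

lemma proper_stack_0: "proper_stack 0 s \<longleftrightarrow> (\<exists>g. s = Sym g)"
  unfolding proper_stack_def by (cases s) auto

lemma proper_stack_Suc: "proper_stack (Suc k) s \<longleftrightarrow> (\<exists>xs. s = Lst xs \<and> xs \<noteq> [] \<and> (\<forall>x\<in>set xs. proper_stack k x))"
  unfolding proper_stack_def by (cases s) auto

lemma is_stack_length_valid_pos: "is_stack k s \<Longrightarrow> valid_pos s x \<Longrightarrow> length x = k"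
proof (induction x arbitrary: s k)
  case Nil then show ?case by (cases s; cases k) auto
next
  case (Cons i x)
  then obtain xs k' where s: "s = Lst xs" "k = Suc k'" by (cases s; cases k) auto
  with Cons have i: "0 < i" "i \<le> length xs" and "valid_pos (xs ! (i - Suc 0)) x" by auto
  from i have "xs ! (i - Suc 0) \<in> set xs" by (intro nth_mem) auto
  with Cons.prems s have "is_stack k' (xs ! (i - Suc 0))" by auto
  with Cons.IH \<open>valid_pos (xs ! (i - Suc 0)) x\<close> s show ?case by auto
qed

lemma proper_stack_length_valid_pos: "proper_stack k s \<Longrightarrow> valid_pos s x \<Longrightarrow> length x = k"
  unfolding proper_stack_def using is_stack_length_valid_pos by blast

lemma valid_pos_nth_gt_0: "valid_pos s x \<Longrightarrow> i < length x \<Longrightarrow> 0 < x ! i"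
proof (induction x arbitrary: s i)
  case Nil then show ?case by auto
next
  case (Cons a x)
  then obtain xs where "s = Lst xs" by (cases s) auto
  with Cons show ?case by (cases i) auto
qed

lemma valid_pos_toppath: "proper_stack k s \<Longrightarrow> valid_pos s (toppath s) \<and> length (toppath s) = k"
proof (induction k arbitrary: s)
  case 0 then show ?case by (auto simp: proper_stack_0)
next
  case (Suc k)
  then obtain xs where s: "s = Lst xs" "xs \<noteq> []" "\<forall>x\<in>set xs. proper_stack k x" by (auto simp: proper_stack_Suc)
  then have "proper_stack k (last xs)" by auto
  with Suc s show ?case by (auto simp: nth_last_index)
qed

lemma valid_pos_nth_le_toppath: "proper_stack k s \<Longrightarrow> valid_pos s x \<Longrightarrow> m < k \<Longrightarrow> take m x = take m (toppath s) \<Longrightarrow> x ! m \<le> toppath s ! m"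
proof (induction m arbitrary: s x k)
  case 0
  then obtain k' where "k = Suc k'" by (cases k) auto
  with 0 obtain xs where s: "s = Lst xs" "xs \<noteq> []" by (auto simp: proper_stack_Suc)
  with 0 show ?case by (cases x) auto
next
  case (Suc m)
  note P = Suc.prems
  from P obtain k' where k: "k = Suc k'" by (cases k) auto
  with P obtain xs where s: "s = Lst xs" "xs \<noteq> []" "\<forall>x\<in>set xs. proper_stack k' x" by (auto simp: proper_stack_Suc)
  with P obtain i y where x: "x = i # y" by (cases x) auto
  with P s have il: "i = length xs" by auto
  with P s x k have "proper_stack k' (last xs)" "valid_pos (last xs) y" "m < k'" "take m y = take m (toppath (last xs))"
    by (auto simp: nth_last_index)
  from Suc.IH[OF this] s x k il show ?case by auto
qed

lemma toppath_substack: "proper_stack k s \<Longrightarrow> m \<le> k \<Longrightarrow>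
   toppath s = take m (toppath s) @ toppath (substack s (take m (toppath s))) \<and> proper_stack (k - m) (substack s (take m (toppath s)))"
proof (induction m arbitrary: s k)
  case 0 then show ?case by auto
next
  case (Suc m)
  then obtain k' where k: "k = Suc k'" by (cases k) auto
  with Suc obtain xs where s: "s = Lst xs" "xs \<noteq> []" "\<forall>x\<in>set xs. proper_stack k' x" by (auto simp: proper_stack_Suc)
  then have "proper_stack k' (last xs)" by auto
  with Suc.IH[where s="last xs" and k=k'] Suc.prems s k show ?case by (auto simp: nth_last_index)
qed

lemma proper_stack_SucE:
  assumes "proper_stack (Suc k) s"
  obtains xs where "s = Lst xs" "xs \<noteq> []" "\<forall>x\<in>set xs. proper_stack k x" "proper_stack k (last xs)"
  using assms by (auto simp: proper_stack_Suc)

lemma toppath_settop0: "toppath (settop0 g s) = toppath s"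
  by (induction g s rule: settop0.induct) auto

lemma valid_pos_settop0: "valid_pos (settop0 g s) x \<longleftrightarrow> valid_pos s x"
proof (induction x arbitrary: s)
  case Nil then show ?case by (cases s) auto
next
  case (Cons i x)
  show ?case
  proof (cases s)
    case (Sym h) then show ?thesis by auto
  next
    case (Lst xs)
    show ?thesis
    proof (cases "xs = []")
      case True then show ?thesis using Lst by auto
    next
      case False
      show ?thesis
      proof (cases "0 < i \<and> i \<le> length xs")
        case True
        then have "i - 1 < length xs" by auto
        show ?thesis
        proof (cases "i = length xs")
          case True
          then have "(butlast xs @ [settop0 g (last xs)]) ! (i - 1) = settop0 g (last xs)"
            "xs ! (i - 1) = last xs" using False by (auto simp: nth_append last_conv_nth)
          then show ?thesis using Lst False Cons.IH[of "last xs"] \<open>0 < i \<and> i \<le> length xs\<close> by simp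
        next
          case F2: False
          then have "(butlast xs @ [settop0 g (last xs)]) ! (i - 1) = xs ! (i - 1)"
            using False \<open>0 < i \<and> i \<le> length xs\<close> by (auto simp: nth_append nth_butlast)
          then show ?thesis using Lst False \<open>0 < i \<and> i \<le> length xs\<close> by simp
        qed
      next
        case F3: False
        then show ?thesis using Lst False by auto
      qed
    qed
  qed
qed

lemma substack_settop0: "valid_pos s y \<Longrightarrow> take m y \<noteq> take m (toppath s) \<Longrightarrow> substack (settop0 g s) (take m y) = substack s (take m y)"
proof (induction m arbitrary: s y)
  case 0 then show ?case by auto
next
  case (Suc m)
  show ?case
  proof (cases y)
    case Nil
    with Suc.prems show ?thesis by (cases s) auto
  next
    case (Cons i z)
    note y = this
  with Suc.prems obtain xs where s: "s = Lst xs" by (cases s) auto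
  with Suc.prems y have ne: "xs \<noteq> []" and i: "0 < i" "i \<le> length xs" by auto
  show ?thesis
  proof (cases "i = length xs")
    case True
    with Suc.prems s y ne have "take m z \<noteq> take m (toppath (last xs))" "valid_pos (last xs) z"
      by (auto simp: nth_last_index)
    with Suc.IH True s y ne show ?thesis by (auto simp: nth_last_index nth_butlast_snoc)
  next
    case False
    with s y ne i show ?thesis by (auto simp: nth_butlast_snoc)
  qed
  qed
qed

lemma toppath_push_d: "proper_stack k s \<Longrightarrow> D < k \<Longrightarrow> toppath (push_d D g s) = (toppath s)[D := toppath s ! D + 1]"
proof (induction D arbitrary: s k)
  case 0
  then obtain k' where k: "k = Suc k'" by (cases k) auto
  with 0 obtain xs where s: "s = Lst xs" "xs \<noteq> []" by (auto elim: proper_stack_SucE)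
  then show ?case by (simp add: toppath_settop0)
next
  case (Suc D)
  then obtain k' where k: "k = Suc k'" by (cases k) auto
  with Suc.prems obtain xs where s: "s = Lst xs" "xs \<noteq> []" "proper_stack k' (last xs)" by (auto elim: proper_stack_SucE)
  with Suc.prems k have "D < k'" by auto
  from Suc.IH[OF s(3) this] s show ?case by simp
qed

lemma valid_pos_push_d: "proper_stack k s \<Longrightarrow> D < k \<Longrightarrow> valid_pos (push_d D g s) x \<Longrightarrow>
  valid_pos s (if take (Suc D) x = take (Suc D) (toppath (push_d D g s)) then x[D := x ! D - 1] else x)"
proof (induction D arbitrary: s k x)
  case 0
  then obtain k' where k: "k = Suc k'" by (cases k) auto
  with 0 obtain xs where s: "s = Lst xs" "xs \<noteq> []" by (auto elim: proper_stack_SucE)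
  from 0 s obtain i y where x: "x = i # y" by (cases x) auto
  show ?case
  proof (cases "i = Suc (length xs)")
    case True
    with 0 s x have "valid_pos (settop0 g (last xs)) y" by (simp add: nth_append)
    with True s x show ?thesis by (simp add: valid_pos_settop0 toppath_settop0 nth_last_index)
  next
    case False
    with 0 s x have "0 < i" "i \<le> Suc (length xs)" by auto
    with False have il: "i \<le> length xs" by auto
    with \<open>0 < i\<close> have "i - Suc 0 < length xs" by auto
    with 0 s x have "valid_pos (xs ! (i - 1)) y" by (auto simp: nth_append)
    with il \<open>0 < i\<close> False s x show ?thesis by (simp add: toppath_settop0)
  qed
next
  case (Suc D)
  then obtain k' where k: "k = Suc k'" by (cases k) auto
  with Suc.prems obtain xs where s: "s = Lst xs" "xs \<noteq> []" "proper_stack k' (last xs)" by (auto elim: proper_stack_SucE)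
  with Suc.prems k have Dk: "D < k'" by auto
  from Suc.prems s obtain i y where x: "x = i # y" by (cases x) auto
  show ?case
  proof (cases "i = length xs")
    case True
    with Suc.prems s x have "valid_pos (push_d D g (last xs)) y" by (simp add: nth_append)
    from Suc.IH[OF s(3) Dk this] True s x show ?thesis by (auto simp: nth_last_index)
  next
    case False
    with Suc.prems s x have i: "0 < i" "i \<le> length xs" by auto
    with False have "i - 1 < length xs - 1" by linarith
    with Suc.prems s x have "valid_pos (xs ! (i - 1)) y"
      by (auto simp: nth_append nth_butlast)
    with False s x i show ?thesis by simp
  qed
qed

lemma substack_push_d: "proper_stack k s \<Longrightarrow> D < k \<Longrightarrow> valid_pos (push_d D g s) y \<Longrightarrow>
  take (Suc E) y \<noteq> take (Suc E) (toppath (push_d D g s)) \<Longrightarrow>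
  substack (push_d D g s) (take (Suc E) y) = substack s (if D \<le> E \<and> take (Suc D) (take (Suc E) y) = take (Suc D) (toppath (push_d D g s))
      then (take (Suc E) y)[D := take (Suc E) y ! D - 1] else take (Suc E) y)"
proof (induction D arbitrary: s k y E)
  case 0
  then obtain k' where k: "k = Suc k'" by (cases k) auto
  with 0 obtain xs where s: "s = Lst xs" "xs \<noteq> []" by (auto elim: proper_stack_SucE)
  from 0 s obtain i z where y: "y = i # z" by (cases y) auto
  show ?case
  proof (cases "i = Suc (length xs)")
    case True
    with 0 s y have v: "valid_pos (settop0 g (last xs)) z" by (simp add: nth_append)
    then have v2: "valid_pos (last xs) z" by (simp add: valid_pos_settop0)
    from 0(4) True s y have "take E z \<noteq> take E (toppath (last xs))" by (simp add: toppath_settop0)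
    from substack_settop0[OF v2 this] True s y show ?thesis by (simp add: toppath_settop0 nth_last_index nth_append)
  next
    case False
    with 0 s y have "0 < i" "i \<le> Suc (length xs)" by auto
    with False have "i - 1 < length xs" by auto
    with False s y show ?thesis by (simp add: toppath_settop0 nth_append)
  qed
next
  case (Suc D)
  then obtain k' where k: "k = Suc k'" by (cases k) auto
  with Suc.prems obtain xs where s: "s = Lst xs" "xs \<noteq> []" "proper_stack k' (last xs)" by (auto elim: proper_stack_SucE)
  with Suc.prems k have Dk: "D < k'" by auto
  from Suc.prems s obtain i z where y: "y = i # z" by (cases y) auto
  show ?case
  proof (cases "i = length xs")
    case True
    with Suc.prems s y have v: "valid_pos (push_d D g (last xs)) z" by (simp add: nth_append)
    show ?thesis
    proof (cases E)
      case 0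
      with Suc.prems True s y show ?thesis by simp
    next
      case (Suc E')
      with Suc.prems True s y have ne: "take (Suc E') z \<noteq> take (Suc E') (toppath (push_d D g (last xs)))" by simp
      from Suc.IH[OF s(3) Dk v ne] True s y Suc show ?thesis by (auto simp: nth_last_index nth_append)
    qed
  next
    case False
    with Suc.prems s y have "0 < i" "i \<le> length xs"
      by (auto simp: nth_append nth_butlast)
    with False s y show ?thesis by (cases E) (auto simp: nth_append nth_butlast)
  qed
qed

lemma pop_d_defined_iff: "proper_stack k s \<Longrightarrow> D < k \<Longrightarrow> (pop_d D s \<noteq> None) \<longleftrightarrow> 2 \<le> toppath s ! D"
proof (induction D arbitrary: s k)
  case 0
  then obtain k' where k: "k = Suc k'" by (cases k) auto
  with 0 obtain xs where s: "s = Lst xs" "xs \<noteq> []" by (auto elim: proper_stack_SucE)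
  then show ?case by simp
next
  case (Suc D)
  then obtain k' where k: "k = Suc k'" by (cases k) auto
  with Suc.prems obtain xs where s: "s = Lst xs" "xs \<noteq> []" "proper_stack k' (last xs)" by (auto elim: proper_stack_SucE)
  with Suc.prems k have "D < k'" by auto
  from Suc.IH[OF s(3) this] s show ?case by simp
qed

lemma toppath_pop_d: "proper_stack k s \<Longrightarrow> D < k \<Longrightarrow> pop_d D s = Some s' \<Longrightarrow>
   take (Suc D) (toppath s') = take D (toppath s) @ [toppath s ! D - 1]"
proof (induction D arbitrary: s k s')
  case 0
  then obtain k' where k: "k = Suc k'" by (cases k) auto
  with 0 obtain xs where s: "s = Lst xs" "xs \<noteq> []" by (auto elim: proper_stack_SucE)
  with 0 have "2 \<le> length xs" "s' = Lst (butlast xs)" by (auto split: if_splits)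
  moreover then have "butlast xs \<noteq> []" by (cases xs rule: rev_cases) auto
  ultimately show ?case using s by simp
next
  case (Suc D)
  then obtain k' where k: "k = Suc k'" by (cases k) auto
  with Suc.prems obtain xs where s: "s = Lst xs" "xs \<noteq> []" "proper_stack k' (last xs)" by (auto elim: proper_stack_SucE)
  with Suc.prems k have Dk: "D < k'" by auto
  from Suc.prems s obtain t where t: "pop_d D (last xs) = Some t" "s' = Lst (butlast xs @ [t])" by auto
  from Suc.IH[OF s(3) Dk t(1)] s t show ?case by simp
qed

lemma valid_pos_pop_d: "proper_stack k s \<Longrightarrow> D < k \<Longrightarrow> pop_d D s = Some s' \<Longrightarrow> valid_pos s' x \<Longrightarrow>
   valid_pos s x \<and> take (Suc D) x \<noteq> take (Suc D) (toppath s)"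
proof (induction D arbitrary: s k s' x)
  case 0
  then obtain k' where k: "k = Suc k'" by (cases k) auto
  with 0 obtain xs where s: "s = Lst xs" "xs \<noteq> []" by (auto elim: proper_stack_SucE)
  with 0 have s': "s' = Lst (butlast xs)" by (auto split: if_splits)
  from 0 s' obtain i y where x: "x = i # y" by (cases x) auto
  with 0 s s' have i: "0 < i" "i \<le> length xs - 1" and v: "valid_pos (butlast xs ! (i - 1)) y" by auto
  have "0 < length xs" using s by auto
  with i have i2: "i - 1 < length xs - 1" "i \<noteq> length xs" by linarith+
  then have "butlast xs ! (i - 1) = xs ! (i - 1)" by (simp add: nth_butlast)
  with v i i2 s x show ?case by auto
next
  case (Suc D)
  then obtain k' where k: "k = Suc k'" by (cases k) auto
  with Suc.prems obtain xs where s: "s = Lst xs" "xs \<noteq> []" "proper_stack k' (last xs)" by (auto elim: proper_stack_SucE)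
  with Suc.prems k have Dk: "D < k'" by auto
  from Suc.prems s obtain t where t: "pop_d D (last xs) = Some t" "s' = Lst (butlast xs @ [t])" by auto
  from Suc.prems t obtain i y where x: "x = i # y" by (cases x) auto
  show ?case
  proof (cases "i = length xs")
    case True
    with Suc.prems t x have "valid_pos t y" by (simp add: nth_append)
    from Suc.IH[OF s(3) Dk t(1) this] True s x show ?thesis by (simp add: nth_last_index)
  next
    case False
    with Suc.prems t x s have i: "0 < i" "i \<le> length xs" by auto
    with False have "i - 1 < length xs - 1" by linarith
    with Suc.prems t x s i False show ?thesis by (auto simp: nth_append nth_butlast)
  qed
qed

lemma substack_pop_d: "proper_stack k s \<Longrightarrow> D < k \<Longrightarrow> pop_d D s = Some s' \<Longrightarrow> valid_pos s' y \<Longrightarrow>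
   \<not> (E < D \<and> take (Suc E) y = take (Suc E) (toppath s)) \<Longrightarrow>
   substack s' (take (Suc E) y) = substack s (take (Suc E) y)"
proof (induction D arbitrary: s k s' y E)
  case 0
  then obtain k' where k: "k = Suc k'" by (cases k) auto
  with 0 obtain xs where s: "s = Lst xs" "xs \<noteq> []" by (auto elim: proper_stack_SucE)
  with 0 have s': "s' = Lst (butlast xs)" by (auto split: if_splits)
  from 0 s' obtain i z where y: "y = i # z" by (cases y) auto
  with 0 s s' show ?case by (auto simp: nth_butlast)
next
  case (Suc D)
  then obtain k' where k: "k = Suc k'" by (cases k) auto
  with Suc.prems obtain xs where s: "s = Lst xs" "xs \<noteq> []" "proper_stack k' (last xs)" by (auto elim: proper_stack_SucE)
  with Suc.prems k have Dk: "D < k'" by auto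
  from Suc.prems s obtain t where t: "pop_d D (last xs) = Some t" "s' = Lst (butlast xs @ [t])" by auto
  from Suc.prems t obtain i z where y: "y = i # z" by (cases y) auto
  show ?case
  proof (cases "i = length xs")
    case True
    with Suc.prems t y have v: "valid_pos t z" by (simp add: nth_append)
    show ?thesis
    proof (cases E)
      case 0
      with Suc.prems True s y show ?thesis by simp
    next
      case (Suc E')
      with Suc.prems True s y have "\<not> (E' < D \<and> take (Suc E') z = take (Suc E') (toppath (last xs)))" by simp
      from Suc.IH[OF s(3) Dk t(1) v this] True s y t Suc show ?thesis by (simp add: nth_last_index nth_append)
    qed
  next
    case False
    with Suc.prems t y s show ?thesis by (cases E) (auto simp: nth_append nth_butlast)
  qed
qed

section \<open>Steps\<close>

definition dpda_step :: "nat \<Rightarrow> ('q, 'g, 'a) delta \<Rightarrow> ('q, 'g) config \<Rightarrow> ('q, 'g) config \<Rightarrow> bool" where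
  "dpda_step n \<delta> c c' \<longleftrightarrow> is_dpda n \<delta> \<and> proper_stack n (snd c) \<and> proper_stack n (snd c') \<and> succ n \<delta> c c'"

lemma dpda_step_cases:
  assumes "dpda_step n \<delta> c c'"
  obtains (rd) f where "trans_at \<delta> c = Some (Read f)" "snd c' = snd c" "\<And>x. hist_step n \<delta> c c' x = x"
  | (pp) q k where "trans_at \<delta> c = Some (Op q (Pop k))" "1 \<le> k" "k \<le> n" "pop_d (n - k) (snd c) = Some (snd c')"
       "\<And>x. hist_step n \<delta> c c' x = x"
  | (ps) q k g where "trans_at \<delta> c = Some (Op q (Push k g))" "1 \<le> k" "k \<le> n" "snd c' = push_d (n - k) g (snd c)"
       "\<And>x. hist_step n \<delta> c c' x = (if take (Suc (n - k)) x = take (Suc (n - k)) (toppath (snd c'))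
             then x[n - k := x ! (n - k) - 1] else x)"
       "toppath (snd c') = (toppath (snd c))[n - k := toppath (snd c) ! (n - k) + 1]"
proof -
  from assms have dp: "is_dpda n \<delta>" and st: "succ n \<delta> c c'" and w: "proper_stack n (snd c)"
    unfolding dpda_step_def by auto
  from st obtain t where t: "trans_at \<delta> c = Some t" unfolding succ_def by (cases "trans_at \<delta> c") auto
  show ?thesis
  proof (cases t)
    case (Read f)
    with t st show ?thesis by (intro rd[of f]) (auto simp: succ_def hist_step_def)
  next
    case (Op q op)
    with t dp have ord: "1 \<le> op_order op" "op_order op \<le> n" unfolding is_dpda_def trans_at_def by auto
    show ?thesis
    proof (cases op)
      case (Pop k)
      with Op t st ord show ?thesis by (intro pp[of q k]) (auto simp: succ_def hist_step_def)
    next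
      case (Push k g)
      with Op t st have c': "snd c' = push_d (n - k) g (snd c)" by (simp add: succ_def)
      moreover have "toppath (snd c') = (toppath (snd c))[n - k := toppath (snd c) ! (n - k) + 1]"
        using c' toppath_push_d[OF w, of "n - k" g] ord Push by simp
      ultimately show ?thesis using Op t st ord Push
        by (intro ps[of q k g]) (auto simp: succ_def hist_step_def)
    qed
  qed
qed

lemma dpda_step_toppath:
  assumes "dpda_step n \<delta> c c'"
  shows "length (toppath (snd c)) = n" "length (toppath (snd c')) = n"
    "valid_pos (snd c) (toppath (snd c))" "valid_pos (snd c') (toppath (snd c'))" "1 \<le> n"
  using assms valid_pos_toppath unfolding dpda_step_def is_dpda_def by auto

lemma dpda_step_proper: "dpda_step n \<delta> c c' \<Longrightarrow> proper_stack n (snd c)" "dpda_step n \<delta> c c' \<Longrightarrow> proper_stack n (snd c')"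
  unfolding dpda_step_def by auto

lemma read_step: "dpda_step n \<delta> c c' \<Longrightarrow> trans_at \<delta> c = Some (Read f) \<Longrightarrow> snd c' = snd c \<and> (\<forall>x. hist_step n \<delta> c c' x = x)"
  by (cases rule: dpda_step_cases) auto

lemma pop_step: "dpda_step n \<delta> c c' \<Longrightarrow> trans_at \<delta> c = Some (Op q (Pop k)) \<Longrightarrow>
   pop_d (n - k) (snd c) = Some (snd c') \<and> (\<forall>x. hist_step n \<delta> c c' x = x) \<and> 1 \<le> k \<and> k \<le> n"
  by (cases rule: dpda_step_cases) auto

lemma push_step: "dpda_step n \<delta> c c' \<Longrightarrow> trans_at \<delta> c = Some (Op q (Push k g)) \<Longrightarrow>
   snd c' = push_d (n - k) g (snd c) \<and>
   (\<forall>x. hist_step n \<delta> c c' x = (if take (Suc (n - k)) x = take (Suc (n - k)) (toppath (snd c'))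
             then x[n - k := x ! (n - k) - 1] else x)) \<and>
   toppath (snd c') = (toppath (snd c))[n - k := toppath (snd c) ! (n - k) + 1] \<and> 1 \<le> k \<and> k \<le> n"
  by (cases rule: dpda_step_cases) auto

lemma take_hist_step:
  assumes "dpda_step n \<delta> c c'"
  shows "take m (hist_step n \<delta> c c' x) = hist_step n \<delta> c c' (take m x)"
  using assms
proof (cases rule: dpda_step_cases)
  case rd then show ?thesis by simp
next
  case pp then show ?thesis by simp
next
  case (ps q k g)
  have lp: "length (toppath (snd c')) = n" using dpda_step_toppath[OF assms] by simp
  show ?thesis
  proof (cases "m \<le> n - k")
    case True
    have "length (take (Suc (n - k)) (take m x)) \<le> n - k" using True by simp
    moreover have "length (take (Suc (n - k)) (toppath (snd c'))) = Suc (n - k)" using lp ps by simp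
    ultimately have "take (Suc (n - k)) (take m x) \<noteq> take (Suc (n - k)) (toppath (snd c'))"
      by (metis Suc_n_not_le_n)
    with True ps show ?thesis by simp
  next
    case False
    then have "take (Suc (n - k)) (take m x) = take (Suc (n - k)) x" by (simp add: min_def)
    with False ps show ?thesis by (simp add: take_update_swap)
  qed
qed

lemma valid_pos_hist_step:
  assumes "dpda_step n \<delta> c c'" "valid_pos (snd c') x"
  shows "valid_pos (snd c) (hist_step n \<delta> c c' x)"
  using assms(1)
proof (cases rule: dpda_step_cases)
  case rd then show ?thesis using assms by simp
next
  case (pp q k)
  with assms valid_pos_pop_d[of n "snd c" "n - k" "snd c'" x] show ?thesis unfolding dpda_step_def by auto
next
  case (ps q k g)
  with assms valid_pos_push_d[of n "snd c" "n - k" g x] show ?thesis unfolding dpda_step_def by auto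
qed

lemma hist_step_push_toppath:
  assumes "dpda_step n \<delta> c c'" "trans_at \<delta> c = Some (Op q (Push k g))"
  shows "hist_step n \<delta> c c' (toppath (snd c')) = toppath (snd c)"
  using assms(1)
proof (cases rule: dpda_step_cases)
  case rd with assms show ?thesis by simp
next
  case pp with assms show ?thesis by simp
next
  case (ps q' k' g')
  have lp: "length (toppath (snd c)) = n" using dpda_step_toppath[OF assms(1)] by simp
  with ps have "n - k' < n" by auto
  with ps lp show ?thesis by simp
qed

lemma hist_step_toppath:
  assumes so: "dpda_step n \<delta> c c'"
  shows "hist_step n \<delta> c c' (toppath (snd c)) = toppath (snd c)"
  using so
proof (cases rule: dpda_step_cases)
  case rd then show ?thesis by simp
next
  case pp then show ?thesis by simp
next
  case (ps q k g)
  have lp: "length (toppath (snd c)) = n" using dpda_step_toppath[OF so] by simp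
  have "take (Suc (n - k)) (toppath (snd c)) \<noteq> take (Suc (n - k)) (toppath (snd c'))"
  proof
    assume "take (Suc (n - k)) (toppath (snd c)) = take (Suc (n - k)) (toppath (snd c'))"
    then have "take (Suc (n - k)) (toppath (snd c)) ! (n - k) = take (Suc (n - k)) (toppath (snd c')) ! (n - k)" by simp
    then have "toppath (snd c) ! (n - k) = toppath (snd c') ! (n - k)" using lp ps(2,3) by simp
    moreover have D: "n - k < length (toppath (snd c))" using lp ps(2,3) by simp
    moreover have "toppath (snd c') ! (n - k) = toppath (snd c) ! (n - k) + 1" unfolding ps(6) using D by simp
    ultimately show False by simp
  qed
  then show ?thesis using ps(5) by simp
qed

lemma push_hist_step_not_top:
  assumes so: "dpda_step n \<delta> c c'" and ps: "trans_at \<delta> c = Some (Op q (Push k g))"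
    and ne: "hist_step n \<delta> c c' (take m y) \<noteq> take m (toppath (snd c))"
  shows "take m y \<noteq> take m (toppath (snd c'))"
proof
  assume "take m y = take m (toppath (snd c'))"
  then have "hist_step n \<delta> c c' (take m y) = take m (hist_step n \<delta> c c' (toppath (snd c')))"
    by (simp add: take_hist_step[OF so])
  also have "\<dots> = take m (toppath (snd c))" using hist_step_push_toppath[OF so ps] by simp
  finally show False using ne by simp
qed

lemma substack_hist_step_push:
  assumes so: "dpda_step n \<delta> c c'" and ps: "trans_at \<delta> c = Some (Op q (Push k g))"
    and v: "valid_pos (snd c') y" and E: "E < n"
    and nt: "take (Suc E) y \<noteq> take (Suc E) (toppath (snd c'))"
  shows "substack (snd c') (take (Suc E) y) = substack (snd c) (hist_step n \<delta> c c' (take (Suc E) y))"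
  using so
proof (cases rule: dpda_step_cases)
  case rd then show ?thesis using ps by simp
next
  case pp then show ?thesis using ps by simp
next
  case (ps q k g)
  have ly: "length y = n" using proper_stack_length_valid_pos[OF dpda_step_proper(2)[OF so] v] .
  have lp: "length (toppath (snd c')) = n" using dpda_step_toppath[OF so] by simp
  from ps v have v': "valid_pos (push_d (n - k) g (snd c)) y" by simp
  have "substack (snd c') (take (Suc E) y) = substack (snd c) (if n - k \<le> E \<and> take (Suc (n - k)) (take (Suc E) y) = take (Suc (n - k)) (toppath (snd c'))
      then (take (Suc E) y)[n - k := take (Suc E) y ! (n - k) - 1] else take (Suc E) y)"
    using substack_push_d[OF dpda_step_proper(1)[OF so] _ v'] nt ps by auto
  also have "(if n - k \<le> E \<and> take (Suc (n - k)) (take (Suc E) y) = take (Suc (n - k)) (toppath (snd c'))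
      then (take (Suc E) y)[n - k := take (Suc E) y ! (n - k) - 1] else take (Suc E) y) =
      hist_step n \<delta> c c' (take (Suc E) y)"
  proof (cases "n - k \<le> E")
    case True then show ?thesis using ps by simp
  next
    case False
    then have "length (take (Suc (n - k)) (take (Suc E) y)) \<noteq> length (take (Suc (n - k)) (toppath (snd c')))"
      using ly lp ps E by auto
    then have nc: "take (Suc (n - k)) (take (Suc E) y) \<noteq> take (Suc (n - k)) (toppath (snd c'))" by metis
    have "hist_step n \<delta> c c' (take (Suc E) y) = take (Suc E) y" using ps(5) nc by simp
    then show ?thesis using False by simp
  qed
  finally show ?thesis .
qed

lemma substack_hist_step:
  assumes so: "dpda_step n \<delta> c c'" and v: "valid_pos (snd c') y" and E: "E < n"
    and ne: "hist_step n \<delta> c c' (take (Suc E) y) \<noteq> take (Suc E) (toppath (snd c))"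
  shows "substack (snd c') (take (Suc E) y) = substack (snd c) (hist_step n \<delta> c c' (take (Suc E) y))"
  using so
proof (cases rule: dpda_step_cases)
  case rd then show ?thesis by simp
next
  case (pp q k)
  with ne have "\<not> (E < n - k \<and> take (Suc E) y = take (Suc E) (toppath (snd c)))" by simp
  from substack_pop_d[OF dpda_step_proper(1)[OF so] _ pp(4) v this] pp show ?thesis by simp
next
  case (ps q k g)
  then show ?thesis
    using substack_hist_step_push[OF so ps(1) v E push_hist_step_not_top[OF so ps(1) ne]] by simp
qed

lemma hist_step_onto_top:
  assumes so: "dpda_step n \<delta> c c'" and v: "valid_pos (snd c') y" and E: "E < n"
    and nt: "take (Suc E) y \<noteq> take (Suc E) (toppath (snd c'))"
    and ht: "hist_step n \<delta> c c' (take (Suc E) y) = take (Suc E) (toppath (snd c))"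
  shows "take (Suc E) y = take (Suc E) (toppath (snd c)) \<and> substack (snd c') (take (Suc E) y) = substack (snd c) (take (Suc E) y)"
  using so
proof (cases rule: dpda_step_cases)
  case rd then show ?thesis using nt ht by simp
next
  case (pp q k)
  have Y: "take (Suc E) y = take (Suc E) (toppath (snd c))" using ht pp by simp
  have "\<not> (E < n - k \<and> take (Suc E) y = take (Suc E) (toppath (snd c)))"
  proof
    assume h: "E < n - k \<and> take (Suc E) y = take (Suc E) (toppath (snd c))"
    have "take (Suc (n - k)) (toppath (snd c')) = take (n - k) (toppath (snd c)) @ [toppath (snd c) ! (n - k) - 1]"
      using toppath_pop_d[OF dpda_step_proper(1)[OF so] _ pp(4)] pp by simp
    moreover have "Suc E \<le> length (toppath (snd c))" using dpda_step_toppath[OF so] E by simp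
    ultimately have "take (Suc E) (take (Suc (n - k)) (toppath (snd c'))) = take (Suc E) (take (n - k) (toppath (snd c)))"
      using h by (simp add: min_def)
    then have "take (Suc E) (toppath (snd c')) = take (Suc E) (toppath (snd c))" using h by (simp add: min_def)
    with h nt show False by simp
  qed
  from substack_pop_d[OF dpda_step_proper(1)[OF so] _ pp(4) v this] pp Y show ?thesis by simp
next
  case (ps q k g)
  let ?p' = "toppath (snd c')" and ?p = "toppath (snd c)"
  have ly: "length y = n" using proper_stack_length_valid_pos[OF dpda_step_proper(2)[OF so] v] .
  have lp: "length ?p' = n" "length ?p = n" using dpda_step_toppath[OF so] by simp_all
  have nC: "\<not> take (Suc (n - k)) (take (Suc E) y) = take (Suc (n - k)) ?p'"
  proof
    assume C: "take (Suc (n - k)) (take (Suc E) y) = take (Suc (n - k)) ?p'"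
    have DE: "n - k \<le> E"
    proof (rule ccontr)
      assume "\<not> n - k \<le> E"
      then have "length (take (Suc (n - k)) (take (Suc E) y)) \<noteq> length (take (Suc (n - k)) ?p')"
        using ly lp ps E by auto
      with C show False by simp
    qed
    have i1: "take (Suc E) y ! (n - k) = ?p' ! (n - k)"
      using C DE ly lp ps by (metis le_imp_less_Suc lessI nth_take)
    have "(take (Suc E) y)[n - k := take (Suc E) y ! (n - k) - 1] = take (Suc E) ?p"
      using ht ps C by simp
    also have "?p = ?p'[n - k := ?p' ! (n - k) - 1]" using ps(6) lp ps by (simp add: list_update_overwrite)
    finally have "(take (Suc E) y)[n - k := ?p' ! (n - k) - 1] = (take (Suc E) ?p')[n - k := ?p' ! (n - k) - 1]"
      using i1 by (simp add: take_update_swap)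
    then have "take (Suc E) y = take (Suc E) ?p'"
      using i1 DE ly lp E by (simp add: list_eq_iff_nth_eq nth_list_update split: if_splits) (metis (no_types) nth_take)
    with nt show False by simp
  qed
  have Y: "take (Suc E) y = take (Suc E) ?p" using ht ps nC by simp
  have "substack (snd c') (take (Suc E) y) = substack (snd c) (hist_step n \<delta> c c' (take (Suc E) y))"
    by (rule substack_hist_step_push[OF so ps(1) v E nt])
  then show ?thesis using Y ht by simp
qed

lemma below_top_prefix_not_top:
  assumes s: "proper_stack n s" and v0: "valid_pos s y0" and DE: "D \<le> E" "E < n"
    and tk: "take D y = take D y0" and le: "y ! D \<le> y0 ! D" and length: "length y = n"
    and nt: "take (Suc D) y0 \<noteq> take (Suc D) (toppath s)"
  shows "take (Suc E) y \<noteq> take (Suc E) (toppath s)"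
proof
  assume "take (Suc E) y = take (Suc E) (toppath s)"
  then have "take (Suc D) y = take (Suc D) (toppath s)" using DE by (metis min_def take_take Suc_le_mono)
  then have a: "take D y = take D (toppath s)" "y ! D = toppath s ! D"
    using take_Suc_conv_app_nth[of D y] take_Suc_conv_app_nth[of D "toppath s"]
      valid_pos_toppath[OF s] length DE by simp_all
  have "y0 ! D \<le> toppath s ! D" using valid_pos_nth_le_toppath[OF s v0] a tk DE by simp
  then have "y0 ! D = toppath s ! D" using a le by simp
  then have "take (Suc D) y0 = take (Suc D) (toppath s)"
    using a tk proper_stack_length_valid_pos[OF s v0] valid_pos_toppath[OF s] DE
      take_Suc_conv_app_nth[of D y0] take_Suc_conv_app_nth[of D "toppath s"] by simp
  with nt show False ..
qed

lemma hist_step_below_top: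
  assumes so: "dpda_step n \<delta> c c'" and D: "D < n" and v0: "valid_pos (snd c') y0"
    and ne: "hist_step n \<delta> c c' (take (Suc D) y0) \<noteq> take (Suc D) (toppath (snd c))"
    and v: "valid_pos (snd c') y" and tk: "take D y = take D y0" and le: "y ! D \<le> y0 ! D"
  shows "hist_step n \<delta> c c' y = take D (hist_step n \<delta> c c' (take (Suc D) y0)) @ drop D y"
proof -
  have tY: "take D (take (Suc D) y0) = take D y" using tk by (simp add: min_def)
  have ly: "length y = n" using proper_stack_length_valid_pos[OF dpda_step_proper(2)[OF so] v] .
  have ly0: "length y0 = n" using proper_stack_length_valid_pos[OF dpda_step_proper(2)[OF so] v0] .
  show ?thesis
  using so
  proof (cases rule: dpda_step_cases)
    case rd then show ?thesis using tY by simp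
  next
    case pp then show ?thesis using tY by simp
  next
    case (ps q k g)
    let ?p' = "toppath (snd c')"
    let ?Y = "take (Suc D) y0"
    have lp: "length ?p' = n" using dpda_step_toppath[OF so] by simp
    have nt: "?Y \<noteq> take (Suc D) ?p'" using push_hist_step_not_top[OF so ps(1) ne] .
    show ?thesis
    proof (cases "n - k < D")
      case True
      have "take (Suc (n - k)) y = take (Suc (n - k)) (take D y)" using True by (simp add: min_def)
      also have "\<dots> = take (Suc (n - k)) (take D y0)" using tk by simp
      also have "\<dots> = take (Suc (n - k)) ?Y" using True by (simp add: min_def)
      finally have e1: "take (Suc (n - k)) y = take (Suc (n - k)) ?Y" .
      show ?thesis
      proof (cases "take (Suc (n - k)) y = take (Suc (n - k)) ?p'")
        case C: True
        then show ?thesis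
          using e1 ps take_update_append_drop[OF True _ tY, of "\<lambda>v. v - 1"] ly D by simp
      next
        case C: False
        then show ?thesis using e1 ps tY by simp
      qed
    next
      case False
      have nC: "take (Suc (n - k)) y \<noteq> take (Suc (n - k)) ?p'"
        using below_top_prefix_not_top[OF dpda_step_proper(2)[OF so] v0 _ _ tk le] nt False ly ps by simp
      have nY: "take (Suc (n - k)) ?Y \<noteq> take (Suc (n - k)) ?p'"
      proof (cases "n - k = D")
        case True then show ?thesis using nt by simp
      next
        case F: False
        have "length (take (Suc (n - k)) ?Y) = Suc D" using False F ly0 D by simp
        moreover have "length (take (Suc (n - k)) ?p') = Suc (n - k)" using lp ps by simp
        ultimately show ?thesis using F by (metis Suc_inject)
      qed
      show ?thesis using nC nY ps tY by simp
    qed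
  qed
qed

lemma hist_step_successor:
  assumes so: "dpda_step n \<delta> c c'" and D: "D < n" and vz: "valid_pos (snd c') z0" and vy: "valid_pos (snd c') y0"
    and tk: "take D z0 = take D y0" and ix: "z0 ! D = y0 ! D + 1"
    and ne: "hist_step n \<delta> c c' (take (Suc D) y0) \<noteq> take (Suc D) (toppath (snd c))"
  shows "take D (hist_step n \<delta> c c' z0) = take D (hist_step n \<delta> c c' y0) \<and>
         hist_step n \<delta> c c' z0 ! D = hist_step n \<delta> c c' y0 ! D + 1"
  using so
proof (cases rule: dpda_step_cases)
  case rd then show ?thesis using tk ix by simp
next
  case pp then show ?thesis using tk ix by simp
next
  case (ps q k g)
  let ?p' = "toppath (snd c')"
  let ?p = "toppath (snd c)"
  have lz: "length z0 = n" using proper_stack_length_valid_pos[OF dpda_step_proper(2)[OF so] vz] .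
  have ly0: "length y0 = n" using proper_stack_length_valid_pos[OF dpda_step_proper(2)[OF so] vy] .
  have lp: "length ?p' = n" "length ?p = n" using dpda_step_toppath[OF so] by simp_all
  have nt: "take (Suc D) y0 \<noteq> take (Suc D) ?p'" using push_hist_step_not_top[OF so ps(1) ne] .
  consider "D < n - k" | "n - k = D" | "n - k < D" by linarith
  then show ?thesis
  proof cases
    case 1
    then show ?thesis using ps tk ix by (auto simp: nth_list_update_neq)
  next
    case 2
    have nCy: "take (Suc (n - k)) y0 \<noteq> take (Suc (n - k)) ?p'" using nt 2 by simp
    have nCz: "take (Suc (n - k)) z0 \<noteq> take (Suc (n - k)) ?p'"
    proof
      assume "take (Suc (n - k)) z0 = take (Suc (n - k)) ?p'"
      then have "take D z0 @ [z0 ! D] = take D ?p' @ [?p' ! D]"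
        using take_Suc_conv_app_nth[of D z0] take_Suc_conv_app_nth[of D ?p'] lz lp D 2 by simp
      then have a: "take D z0 = take D ?p'" "z0 ! D = ?p' ! D" by simp_all
      have "take (Suc D) y0 = take D ?p' @ [?p' ! D - 1]" using a tk ix ly0 D take_Suc_conv_app_nth[of D y0] by simp
      also have "\<dots> = take (Suc D) ?p"
        using ps(6) 2 lp D take_Suc_conv_app_nth[of D ?p] by (simp add: take_update_cancel)
      finally have "take (Suc D) y0 = take (Suc D) ?p" .
      moreover have "hist_step n \<delta> c c' (take (Suc D) y0) = take (Suc D) y0" using ps nCy 2 by simp
      ultimately show False using ne by simp
    qed
    show ?thesis using ps nCy nCz tk ix by simp
  next
    case 3
    have "take (Suc (n - k)) z0 = take (Suc (n - k)) (take D z0)" using 3 by (simp add: min_def)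
    also have "\<dots> = take (Suc (n - k)) y0" using 3 tk by (simp add: min_def)
    finally have e: "take (Suc (n - k)) z0 = take (Suc (n - k)) y0" .
    have "z0 ! (n - k) = take D z0 ! (n - k)" using 3 by simp
    also have "\<dots> = y0 ! (n - k)" using 3 tk by simp
    finally have e2: "z0 ! (n - k) = y0 ! (n - k)" .
    show ?thesis using ps e e2 tk ix 3 by (auto simp: take_update_swap)
  qed
qed

lemma performs_order: "is_dpda n \<delta> \<Longrightarrow> performs \<delta> c p \<Longrightarrow> 1 \<le> op_order p \<and> op_order p \<le> n"
  unfolding is_dpda_def performs_def trans_at_def by auto

section \<open>History along a run\<close>

fun hist_run :: "nat \<Rightarrow> ('q, 'g, 'a) delta \<Rightarrow> ('q, 'g) config list \<Rightarrow> nat list \<Rightarrow> nat list" where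
  "hist_run n \<delta> (c # c' # cs) x = hist_step n \<delta> c c' (hist_run n \<delta> (c' # cs) x)"
| "hist_run n \<delta> _ x = x"

lemma hist_rev_snoc: "hist_rev n \<delta> (ys @ [c', c]) x = hist_step n \<delta> c c' (hist_rev n \<delta> (ys @ [c']) x)"
  by (induction ys arbitrary: x rule: induct_list012) auto

lemma hist0_eq_hist_run: "hist0 n \<delta> R x = hist_run n \<delta> R x"
proof (induction n \<delta> R x rule: hist_run.induct)
  case (1 n \<delta> c c' cs x)
  then show ?case unfolding hist0_def by (simp add: hist_rev_snoc)
next
  case ("2_1" n \<delta> x) then show ?case by (simp add: hist0_def)
next
  case ("2_2" n \<delta> v x) then show ?case by (simp add: hist0_def)
qed

lemma is_run_ConsD:
  assumes "is_run n \<delta> (c # c' # cs)" "is_dpda n \<delta>"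
  shows "is_run n \<delta> (c' # cs)" "dpda_step n \<delta> c c'"
proof -
  from assms have s: "succ n \<delta> c c'" unfolding is_run_def by force
  from assms show "is_run n \<delta> (c' # cs)" unfolding is_run_def by force
  from assms s show "dpda_step n \<delta> c c'" unfolding is_run_def dpda_step_def wf_config_def proper_stack_def by auto
qed

lemma proper_stack_hd_run: "is_run n \<delta> Q \<Longrightarrow> proper_stack n (snd (hd Q))"
  unfolding is_run_def wf_config_def proper_stack_def by (cases Q) auto

lemma proper_stack_last_run: "is_run n \<delta> Q \<Longrightarrow> proper_stack n (snd (last Q))"
  unfolding is_run_def wf_config_def proper_stack_def by auto

lemma valid_pos_hist_run: "is_dpda n \<delta> \<Longrightarrow> is_run n \<delta> Q \<Longrightarrow> valid_pos (snd (last Q)) x \<Longrightarrow> valid_pos (snd (hd Q)) (hist_run n \<delta> Q x)"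
proof (induction n \<delta> Q x rule: hist_run.induct)
  case (1 n \<delta> c c' cs x)
  from is_run_ConsD[OF 1(3) 1(2)] have r: "is_run n \<delta> (c' # cs)" "dpda_step n \<delta> c c'" .
  from 1(1)[OF 1(2) r(1)] 1(4) have "valid_pos (snd c') (hist_run n \<delta> (c' # cs) x)" by simp
  from valid_pos_hist_step[OF r(2) this] show ?case by simp
qed (auto simp: is_run_def)

lemma take_hist_run: "is_dpda n \<delta> \<Longrightarrow> is_run n \<delta> Q \<Longrightarrow> take m (hist_run n \<delta> Q x) = hist_run n \<delta> Q (take m x)"
proof (induction n \<delta> Q x rule: hist_run.induct)
  case (1 n \<delta> c c' cs x)
  from is_run_ConsD[OF 1(3) 1(2)] have r: "is_run n \<delta> (c' # cs)" "dpda_step n \<delta> c c'" .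
  show ?case using take_hist_step[OF r(2)] 1(1)[OF 1(2) r(1)] by simp
qed auto

lemma hist_run_take_cong: "is_dpda n \<delta> \<Longrightarrow> is_run n \<delta> Q \<Longrightarrow> take m x = take m y \<Longrightarrow> take m (hist_run n \<delta> Q x) = take m (hist_run n \<delta> Q y)"
proof -
  assume a: "is_dpda n \<delta>" "is_run n \<delta> Q" "take m x = take m y"
  have "take m (hist_run n \<delta> Q x) = hist_run n \<delta> Q (take m x)" by (rule take_hist_run[OF a(1,2)])
  also have "\<dots> = hist_run n \<delta> Q (take m y)" using a(3) by simp
  also have "\<dots> = take m (hist_run n \<delta> Q y)" by (rule take_hist_run[OF a(1,2), symmetric])
  finally show ?thesis .
qed

lemma hist_stk_eq_hist_run:
  assumes dp: "is_dpda n \<delta>" and r: "is_run n \<delta> Q" and x: "valid_pos (snd (last Q)) x"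
  shows "hist_stk n \<delta> Q l (take (n - l) x) = take (n - l) (hist_run n \<delta> Q x)"
  unfolding hist_stk_def
proof (rule the_equality)
  show "(\<exists>xa\<in>positions (snd (hd Q)). take (n - l) xa = take (n - l) (hist_run n \<delta> Q x)) \<and>
    (\<forall>xa\<in>positions (snd (last Q)). take (n - l) xa = take (n - l) x \<longrightarrow>
       take (n - l) (hist0 n \<delta> Q xa) = take (n - l) (hist_run n \<delta> Q x))"
  proof
    show "\<exists>xa\<in>positions (snd (hd Q)). take (n - l) xa = take (n - l) (hist_run n \<delta> Q x)"
    proof
      show "hist_run n \<delta> Q x \<in> positions (snd (hd Q))" using valid_pos_hist_run[OF dp r x] by (simp add: positions_iff_valid_pos)
    qed simp
    show "\<forall>xa\<in>positions (snd (last Q)). take (n - l) xa = take (n - l) x \<longrightarrow>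
       take (n - l) (hist0 n \<delta> Q xa) = take (n - l) (hist_run n \<delta> Q x)"
      using hist_run_take_cong[OF dp r] unfolding hist0_eq_hist_run by blast
  qed
next
  fix P' assume "(\<exists>xa\<in>positions (snd (hd Q)). take (n - l) xa = P') \<and>
    (\<forall>xa\<in>positions (snd (last Q)). take (n - l) xa = take (n - l) x \<longrightarrow> take (n - l) (hist0 n \<delta> Q xa) = P')"
  then have "\<forall>xa\<in>positions (snd (last Q)). take (n - l) xa = take (n - l) x \<longrightarrow> take (n - l) (hist0 n \<delta> Q xa) = P'" by blast
  moreover have "x \<in> positions (snd (last Q))" using x by (simp add: positions_iff_valid_pos)
  ultimately show "P' = take (n - l) (hist_run n \<delta> Q x)" unfolding hist0_eq_hist_run by auto
qed

lemma is_run_drop: "is_run n \<delta> Q \<Longrightarrow> i < length Q \<Longrightarrow> is_run n \<delta> (drop i Q)"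
  unfolding is_run_def by (auto dest: in_set_dropD)

lemma upper_iff_hist_run:
  assumes dp: "is_dpda n \<delta>" and r: "is_run n \<delta> Q"
  shows "upper n \<delta> l Q \<longleftrightarrow> take (n - l) (hist_run n \<delta> Q (toppath (snd (last Q)))) = take (n - l) (toppath (snd (hd Q)))"
  unfolding upper_def top_id_def
  using hist_stk_eq_hist_run[OF dp r valid_pos_toppath[OF proper_stack_last_run[OF r], THEN conjunct1]] by simp

lemma pop_top_id_iff:
  assumes s: "proper_stack n s" and k: "1 \<le> k" "k \<le> n"
  shows "(\<exists>s'. apply_op n (Pop k) s = Some s' \<and> X = top_id n (k - 1) s') \<longleftrightarrow>
    2 \<le> toppath s ! (n - k) \<and> X = take (n - k) (toppath s) @ [toppath s ! (n - k) - 1]"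
proof -
  have nk: "n - (k - 1) = Suc (n - k)" and D: "n - k < n" using k by auto
  show ?thesis
  proof
    assume "\<exists>s'. apply_op n (Pop k) s = Some s' \<and> X = top_id n (k - 1) s'"
    then obtain s' where s': "pop_d (n - k) s = Some s'" "X = take (Suc (n - k)) (toppath s')"
      unfolding top_id_def nk by auto
    then show "2 \<le> toppath s ! (n - k) \<and> X = take (n - k) (toppath s) @ [toppath s ! (n - k) - 1]"
      using pop_d_defined_iff[OF s D] toppath_pop_d[OF s D s'(1)] by auto
  next
    assume h: "2 \<le> toppath s ! (n - k) \<and> X = take (n - k) (toppath s) @ [toppath s ! (n - k) - 1]"
    then obtain s' where s': "pop_d (n - k) s = Some s'" using pop_d_defined_iff[OF s D] by auto
    then show "\<exists>s'. apply_op n (Pop k) s = Some s' \<and> X = top_id n (k - 1) s'"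
      using h toppath_pop_d[OF s D s'] nk unfolding top_id_def by auto
  qed
qed

lemma is_return_iff_hist_run:
  assumes dp: "is_dpda n \<delta>" and r: "is_run n \<delta> Q" and k: "1 \<le> k" "k \<le> n"
  shows "is_return n \<delta> k Q \<longleftrightarrow>
    2 \<le> toppath (snd (hd Q)) ! (n - k) \<and>
    take (Suc (n - k)) (hist_run n \<delta> Q (toppath (snd (last Q)))) =
       take (n - k) (toppath (snd (hd Q))) @ [toppath (snd (hd Q)) ! (n - k) - 1] \<and>
    (\<forall>i < length Q - 1. take (Suc (n - k)) (hist_run n \<delta> (drop i Q) (toppath (snd (last Q)))) \<noteq>
        take (Suc (n - k)) (toppath (snd (Q ! i))))"
proof -
  have nk: "n - (k - 1) = Suc (n - k)" using k by simp
  note pop = pop_top_id_iff[OF proper_stack_hd_run[OF r] k]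
  have hs: "hist_stk n \<delta> Q (k - 1) (top_id n (k - 1) (snd (last Q))) = take (Suc (n - k)) (hist_run n \<delta> Q (toppath (snd (last Q))))"
  proof -
    have "hist_stk n \<delta> Q (k - 1) (take (n - (k - 1)) (toppath (snd (last Q)))) =
       take (n - (k - 1)) (hist_run n \<delta> Q (toppath (snd (last Q))))"
      by (rule hist_stk_eq_hist_run[OF dp r valid_pos_toppath[OF proper_stack_last_run[OF r], THEN conjunct1]])
    then show ?thesis unfolding top_id_def nk .
  qed
  have up: "upper n \<delta> (k - 1) (drop i Q) \<longleftrightarrow> take (Suc (n - k)) (hist_run n \<delta> (drop i Q) (toppath (snd (last Q)))) =
        take (Suc (n - k)) (toppath (snd (Q ! i)))" if "i < length Q - 1" for i
  proof -
    have "i < length Q" using that by simp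
    then have "is_run n \<delta> (drop i Q)" "hd (drop i Q) = Q ! i" "last (drop i Q) = last Q"
      using is_run_drop[OF r] by (auto simp: hd_drop_conv_nth)
    then show ?thesis using upper_iff_hist_run[OF dp, of "drop i Q" "k - 1"] unfolding nk by simp
  qed
  have "is_return n \<delta> k Q \<longleftrightarrow> (\<exists>s'. apply_op n (Pop k) (snd (hd Q)) = Some s' \<and>
        take (Suc (n - k)) (hist_run n \<delta> Q (toppath (snd (last Q)))) = top_id n (k - 1) s') \<and>
     (\<forall>i < length Q - 1. \<not> upper n \<delta> (k - 1) (drop i Q))"
    unfolding is_return_def hs by simp
  also have "\<dots> \<longleftrightarrow> (2 \<le> toppath (snd (hd Q)) ! (n - k) \<and>
    take (Suc (n - k)) (hist_run n \<delta> Q (toppath (snd (last Q)))) =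
       take (n - k) (toppath (snd (hd Q))) @ [toppath (snd (hd Q)) ! (n - k) - 1]) \<and>
     (\<forall>i < length Q - 1. \<not> upper n \<delta> (k - 1) (drop i Q))"
    using pop[of "take (Suc (n - k)) (hist_run n \<delta> Q (toppath (snd (last Q))))"] by metis
  also have "\<dots> \<longleftrightarrow> (2 \<le> toppath (snd (hd Q)) ! (n - k) \<and>
    take (Suc (n - k)) (hist_run n \<delta> Q (toppath (snd (last Q)))) =
       take (n - k) (toppath (snd (hd Q))) @ [toppath (snd (hd Q)) ! (n - k) - 1]) \<and>
    (\<forall>i < length Q - 1. take (Suc (n - k)) (hist_run n \<delta> (drop i Q) (toppath (snd (last Q)))) \<noteq>
        take (Suc (n - k)) (toppath (snd (Q ! i))))" using up by auto
  finally show ?thesis by simp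
qed

section \<open>Returns inside a fixed run\<close>

locale dpda_run =
  fixes n :: nat and \<delta> :: "('q, 'g, 'a) delta" and R :: "('q, 'g) config list"
  assumes dp: "is_dpda n \<delta>" and run: "is_run n \<delta> R"
begin

abbreviation N where "N \<equiv> length R - 1"

definition stack where "stack i = snd (R ! i)"

definition top_pos where "top_pos i = toppath (stack i)"

definition seg where "seg a b = take (Suc b - a) (drop a R)"

definition hist where "hist a b x = hist_run n \<delta> (seg a b) x"

lemma length_R: "length R = Suc N"
  using run unfolding is_run_def by simp

lemma proper_stack_at: "i \<le> N \<Longrightarrow> proper_stack n (stack i)"
  using run length_R unfolding is_run_def stack_def wf_config_def proper_stack_def
  by (metis le_imp_less_Suc nth_mem)

lemma step_at: "i < N \<Longrightarrow> dpda_step n \<delta> (R ! i) (R ! Suc i)"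
  using run dp length_R proper_stack_at[of i] proper_stack_at[of "Suc i"] unfolding is_run_def dpda_step_def stack_def by auto

lemma valid_pos_top_pos: "i \<le> N \<Longrightarrow> valid_pos (stack i) (top_pos i)" "i \<le> N \<Longrightarrow> length (top_pos i) = n"
  using valid_pos_toppath[OF proper_stack_at] unfolding top_pos_def by auto

lemma length_valid_pos: "i \<le> N \<Longrightarrow> valid_pos (stack i) x \<Longrightarrow> length x = n"
  using proper_stack_length_valid_pos[OF proper_stack_at] by blast

lemma drop_Cons_nth: "a \<le> N \<Longrightarrow> drop a R = R ! a # drop (Suc a) R"
  using length_R by (simp add: Cons_nth_drop_Suc)

lemma seg_Cons: "a < b \<Longrightarrow> b \<le> N \<Longrightarrow> seg a b = R ! a # seg (Suc a) b"
proof -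
  assume ab: "a < b" "b \<le> N"
  then have e: "Suc b - a = Suc (b - a)" "Suc b - Suc a = b - a" by auto
  show ?thesis unfolding seg_def e drop_Cons_nth[of a] using ab drop_Cons_nth[of a] by simp
qed

lemma seg_single: "a \<le> N \<Longrightarrow> seg a a = [R ! a]"
  unfolding seg_def using drop_Cons_nth[of a] by simp

lemma seg_len: "a \<le> b \<Longrightarrow> b \<le> N \<Longrightarrow> length (seg a b) = Suc b - a"
  unfolding seg_def using length_R by simp

lemma seg_nth: "a \<le> b \<Longrightarrow> b \<le> N \<Longrightarrow> i \<le> b - a \<Longrightarrow> seg a b ! i = R ! (a + i)"
  unfolding seg_def using length_R by simp

lemma seg_ne: "a \<le> b \<Longrightarrow> b \<le> N \<Longrightarrow> seg a b \<noteq> []"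
  using seg_len by fastforce

lemma seg_hd: "a \<le> b \<Longrightarrow> b \<le> N \<Longrightarrow> hd (seg a b) = R ! a"
  using seg_nth[of a b 0] seg_ne[of a b] by (simp add: hd_conv_nth)

lemma seg_last: "a \<le> b \<Longrightarrow> b \<le> N \<Longrightarrow> last (seg a b) = R ! b"
  using seg_nth[of a b "b - a"] seg_len[of a b] seg_ne[of a b] by (simp add: last_conv_nth)

lemma seg_drop: "a \<le> b \<Longrightarrow> b \<le> N \<Longrightarrow> i \<le> b - a \<Longrightarrow> drop i (seg a b) = seg (a + i) b"
proof -
  assume "a \<le> b" "b \<le> N" "i \<le> b - a"
  then have e: "Suc b - a - i = Suc b - (a + i)" by auto
  show ?thesis unfolding seg_def drop_take drop_drop e by (simp add: add.commute)
qed

lemma seg_run: "a \<le> b \<Longrightarrow> b \<le> N \<Longrightarrow> is_run n \<delta> (seg a b)"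
proof -
  assume ab: "a \<le> b" "b \<le> N"
  have "seg a b \<noteq> []" using seg_ne[OF ab] .
  moreover have "\<forall>c\<in>set (seg a b). wf_config n c"
    using run unfolding is_run_def seg_def by (auto dest: in_set_takeD in_set_dropD)
  moreover have "\<forall>i. Suc i < length (seg a b) \<longrightarrow> succ n \<delta> (seg a b ! i) (seg a b ! Suc i)"
  proof (intro allI impI)
    fix i assume "Suc i < length (seg a b)"
    then have "Suc i \<le> b - a" using seg_len[OF ab] by simp
    then show "succ n \<delta> (seg a b ! i) (seg a b ! Suc i)"
      using seg_nth[OF ab, of i] seg_nth[OF ab, of "Suc i"] step_at[of "a + i"] ab
      unfolding dpda_step_def by auto
  qed
  ultimately show ?thesis unfolding is_run_def by blast
qed

lemma hist_refl: "a \<le> N \<Longrightarrow> hist a a x = x"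
  unfolding hist_def using seg_single by simp

lemma hist_Suc: "a < b \<Longrightarrow> b \<le> N \<Longrightarrow> hist a b x = hist_step n \<delta> (R ! a) (R ! Suc a) (hist (Suc a) b x)"
proof -
  assume ab: "a < b" "b \<le> N"
  show ?thesis
  proof (cases "Suc a = b")
    case True
    then show ?thesis unfolding hist_def using seg_Cons[OF ab] seg_single[of b] ab by simp
  next
    case False
    then have "seg (Suc a) b = R ! Suc a # seg (Suc (Suc a)) b" using seg_Cons ab by simp
    then show ?thesis unfolding hist_def using seg_Cons[OF ab] by simp
  qed
qed

lemma hist_trans: "a \<le> j \<Longrightarrow> j \<le> b \<Longrightarrow> b \<le> N \<Longrightarrow> hist a b x = hist a j (hist j b x)"
proof (induction a rule: inc_induct)
  case base then show ?case using hist_refl by simp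
next
  case (step a)
  then show ?case using hist_Suc[of a b] hist_Suc[of a j] by simp
qed

lemma valid_pos_hist: "a \<le> b \<Longrightarrow> b \<le> N \<Longrightarrow> valid_pos (stack b) x \<Longrightarrow> valid_pos (stack a) (hist a b x)"
  unfolding hist_def stack_def using valid_pos_hist_run[OF dp seg_run] seg_hd seg_last by metis

lemma take_hist: "a \<le> b \<Longrightarrow> b \<le> N \<Longrightarrow> take m (hist a b x) = hist a b (take m x)"
  unfolding hist_def using take_hist_run[OF dp seg_run] by metis

lemma hist_take_cong: "a \<le> b \<Longrightarrow> b \<le> N \<Longrightarrow> take m x = take m y \<Longrightarrow> take m (hist a b x) = take m (hist a b y)"
  using take_hist by metis

text \<open>The \<open>r\<close>-return condition for \<open>R[a, b]\<close> on positions: an \<open>(r - 1)\<close>-stack is identified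
  by a position prefix of length \<open>n - r + 1\<close>.\<close>

definition returns where "returns r a b \<longleftrightarrow> 2 \<le> top_pos a ! (n - r) \<and>
   take (Suc (n - r)) (hist a b (top_pos b)) = take (n - r) (top_pos a) @ [top_pos a ! (n - r) - 1] \<and>
   (\<forall>i. a \<le> i \<longrightarrow> i < b \<longrightarrow> take (Suc (n - r)) (hist i b (top_pos b)) \<noteq> take (Suc (n - r)) (top_pos i))"

lemma is_return_seg_iff: "a \<le> b \<Longrightarrow> b \<le> N \<Longrightarrow> 1 \<le> r \<Longrightarrow> r \<le> n \<Longrightarrow> is_return n \<delta> r (seg a b) \<longleftrightarrow> returns r a b"
proof -
  assume ab: "a \<le> b" "b \<le> N" and r: "1 \<le> r" "r \<le> n"
  have e1: "hist_run n \<delta> (seg a b) (toppath (snd (last (seg a b)))) = hist a b (top_pos b)"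
    unfolding hist_def top_pos_def stack_def using seg_last[OF ab] by simp
  have e2: "(\<forall>i < length (seg a b) - 1. take (Suc (n - r)) (hist_run n \<delta> (drop i (seg a b)) (toppath (snd (last (seg a b))))) \<noteq>
        take (Suc (n - r)) (toppath (snd (seg a b ! i)))) \<longleftrightarrow>
     (\<forall>i. a \<le> i \<longrightarrow> i < b \<longrightarrow> take (Suc (n - r)) (hist i b (top_pos b)) \<noteq> take (Suc (n - r)) (top_pos i))"
  proof
    assume h: "\<forall>i < length (seg a b) - 1. take (Suc (n - r)) (hist_run n \<delta> (drop i (seg a b)) (toppath (snd (last (seg a b))))) \<noteq>
        take (Suc (n - r)) (toppath (snd (seg a b ! i)))"
    show "\<forall>i. a \<le> i \<longrightarrow> i < b \<longrightarrow> take (Suc (n - r)) (hist i b (top_pos b)) \<noteq> take (Suc (n - r)) (top_pos i)"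
    proof (intro allI impI)
      fix i assume i: "a \<le> i" "i < b"
      with h[rule_format, of "i - a"] seg_len[OF ab] seg_drop[OF ab, of "i - a"] seg_nth[OF ab, of "i - a"] seg_last[OF ab]
      show "take (Suc (n - r)) (hist i b (top_pos b)) \<noteq> take (Suc (n - r)) (top_pos i)"
        unfolding hist_def top_pos_def stack_def by simp
    qed
  next
    assume h: "\<forall>i. a \<le> i \<longrightarrow> i < b \<longrightarrow> take (Suc (n - r)) (hist i b (top_pos b)) \<noteq> take (Suc (n - r)) (top_pos i)"
    show "\<forall>i < length (seg a b) - 1. take (Suc (n - r)) (hist_run n \<delta> (drop i (seg a b)) (toppath (snd (last (seg a b))))) \<noteq>
        take (Suc (n - r)) (toppath (snd (seg a b ! i)))"
    proof (intro allI impI)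
      fix i assume i: "i < length (seg a b) - 1"
      with h[rule_format, of "a + i"] seg_len[OF ab] seg_drop[OF ab, of i] seg_nth[OF ab, of i] seg_last[OF ab]
      show "take (Suc (n - r)) (hist_run n \<delta> (drop i (seg a b)) (toppath (snd (last (seg a b))))) \<noteq>
        take (Suc (n - r)) (toppath (snd (seg a b ! i)))"
        unfolding hist_def top_pos_def stack_def by simp
    qed
  qed
  show ?thesis
    unfolding is_return_iff_hist_run[OF dp seg_run[OF ab] r] returns_def e1 e2
    using seg_hd[OF ab] unfolding top_pos_def stack_def by simp
qed

lemma stack_nth: "snd (R ! i) = stack i" "toppath (snd (R ! i)) = top_pos i"
  unfolding stack_def top_pos_def by simp_all

lemma toppath_stack: "toppath (stack i) = top_pos i"
  by (simp add: top_pos_def)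

lemma top_pos_nth_gt_0: "i \<le> N \<Longrightarrow> d < n \<Longrightarrow> 0 < top_pos i ! d"
  using valid_pos_nth_gt_0[OF valid_pos_top_pos(1)] valid_pos_top_pos(2) by simp

lemma length_hist: "a \<le> b \<Longrightarrow> b \<le> N \<Longrightarrow> valid_pos (stack b) x \<Longrightarrow> length (hist a b x) = n"
  using length_valid_pos valid_pos_hist by (meson le_trans)

lemma take_hist_Suc: "a < b \<Longrightarrow> b \<le> N \<Longrightarrow>
  take m (hist a b x) = hist_step n \<delta> (R ! a) (R ! Suc a) (take m (hist (Suc a) b x))"
  using hist_Suc take_hist_step[OF step_at[of a]] by simp

lemma hist_step_not_top:
  assumes "a < b" "b \<le> N" and "take (Suc D) (hist a b x) \<noteq> take (Suc D) (top_pos a)"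
  shows "hist_step n \<delta> (R ! a) (R ! Suc a) (take (Suc D) (hist (Suc a) b x)) \<noteq> take (Suc D) (toppath (snd (R ! a)))"
  using assms take_hist_Suc[of a b "Suc D" x] stack_nth by simp

text \<open>As long as the history of \<open>x0\<close> never meets the topmost \<open>(n - D - 1)\<close>-stack, positions
  sharing the first \<open>D\<close> coordinates of \<open>x0\<close> and not above it in coordinate \<open>D\<close> travel with it:
  only their first \<open>D\<close> coordinates change, and they change exactly as those of \<open>x0\<close>.\<close>

lemma hist_below_top:
  assumes ab: "a \<le> b" "b \<le> N" and D: "D < n" and x0: "valid_pos (stack b) x0"
    and never_top: "\<forall>i. a \<le> i \<longrightarrow> i < b \<longrightarrow> take (Suc D) (hist i b x0) \<noteq> take (Suc D) (top_pos i)"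
  shows "valid_pos (stack b) y \<Longrightarrow> take D y = take D x0 \<Longrightarrow> y ! D \<le> x0 ! D \<Longrightarrow>
    hist a b y = take D (hist a b x0) @ drop D y"
  using ab(1) never_top
proof (induction a arbitrary: y rule: inc_induct)
  case base
  then show ?case using hist_refl[OF ab(2)] by (metis append_take_drop_id)
next
  case (step a y)
  have vy: "valid_pos (stack b) y" and tk: "take D y = take D x0" and le: "y ! D \<le> x0 ! D"
    and nt: "\<forall>i. a \<le> i \<longrightarrow> i < b \<longrightarrow> take (Suc D) (hist i b x0) \<noteq> take (Suc D) (top_pos i)"
    using step.prems by blast+
  then have IH: "\<And>y. valid_pos (stack b) y \<Longrightarrow> take D y = take D x0 \<Longrightarrow> y ! D \<le> x0 ! D \<Longrightarrow>
      hist (Suc a) b y = take D (hist (Suc a) b x0) @ drop D y"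
    using step.IH by auto
  let ?u = "hist (Suc a) b x0"
  let ?v = "hist (Suc a) b y"
  have ab': "a < b" "Suc a \<le> b" using step.hyps by auto
  have ly0: "length ?u = n" and ly: "length y = n" and lx0: "length x0 = n"
    using length_hist[of "Suc a" b] length_valid_pos[of b] ab' ab(2) x0 vy by auto
  have so: "dpda_step n \<delta> (R ! a) (R ! Suc a)" using step_at ab' ab(2) by simp
  have ne: "hist_step n \<delta> (R ! a) (R ! Suc a) (take (Suc D) ?u) \<noteq> take (Suc D) (toppath (snd (R ! a)))"
    using hist_step_not_top[OF ab'(1) ab(2)] nt ab' by simp
  have v: "valid_pos (snd (R ! Suc a)) ?u" "valid_pos (snd (R ! Suc a)) ?v"
    using valid_pos_hist[of "Suc a" b] ab' ab(2) x0 vy by (simp_all add: stack_def)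
  have y0: "?u = take D ?u @ drop D x0" using IH[OF x0 refl order.refl] .
  have "?u ! D = (take D ?u @ drop D x0) ! D" by (rule arg_cong[where f="\<lambda>l. l ! D", OF y0])
  also have "\<dots> = x0 ! D" using ly0 lx0 D by (simp add: nth_append)
  finally have y0D: "?u ! D = x0 ! D" .
  have y: "?v = take D ?u @ drop D y" using IH[OF vy tk le] .
  then have tk': "take D ?v = take D ?u" and dr: "drop D ?v = drop D y" and yD: "?v ! D = y ! D"
    using ly0 ly D by (auto simp: nth_append)
  have hy: "hist_step n \<delta> (R ! a) (R ! Suc a) ?v =
      take D (hist_step n \<delta> (R ! a) (R ! Suc a) (take (Suc D) ?u)) @ drop D ?v"
    using hist_step_below_top[OF so D v(1) ne v(2) tk'] yD le y0D by simp
  have "take D (hist a b x0) = take D (take (Suc D) (hist a b x0))" by (simp add: min_def)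
  also have "\<dots> = take D (hist_step n \<delta> (R ! a) (R ! Suc a) (take (Suc D) ?u))"
    using take_hist_Suc[OF ab'(1) ab(2), of "Suc D" x0] by simp
  finally show ?case using hist_Suc[OF ab'(1) ab(2), of y] hy dr by simp
qed

lemma substack_hist_below_top:
  assumes ab: "a \<le> b" "b \<le> N" and D: "D < n" and x0: "valid_pos (stack b) x0"
    and never_top: "\<forall>i. a \<le> i \<longrightarrow> i < b \<longrightarrow> take (Suc D) (hist i b x0) \<noteq> take (Suc D) (top_pos i)"
  shows "substack (stack a) (take (Suc D) (hist a b x0)) = substack (stack b) (take (Suc D) x0)"
  using ab(1) never_top
proof (induction a rule: inc_induct)
  case base
  then show ?case using hist_refl[OF ab(2)] by simp
next
  case (step a)
  have ab': "a < b" "Suc a \<le> b" using step.hyps by auto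
  have so: "dpda_step n \<delta> (R ! a) (R ! Suc a)" using step_at ab' ab(2) by simp
  have v: "valid_pos (snd (R ! Suc a)) (hist (Suc a) b x0)"
    using valid_pos_hist[of "Suc a" b] ab' ab(2) x0 by (simp add: stack_def)
  have ne: "hist_step n \<delta> (R ! a) (R ! Suc a) (take (Suc D) (hist (Suc a) b x0)) \<noteq> take (Suc D) (toppath (snd (R ! a)))"
    using hist_step_not_top[OF ab'(1) ab(2)] step.prems ab' by simp
  have "substack (stack (Suc a)) (take (Suc D) (hist (Suc a) b x0)) =
      substack (stack a) (hist_step n \<delta> (R ! a) (R ! Suc a) (take (Suc D) (hist (Suc a) b x0)))"
    using substack_hist_step[OF so v D ne] by (simp add: stack_def)
  then show ?case using step.IH step.prems take_hist_Suc[OF ab'(1) ab(2)] by simp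
qed

lemma hist_successor:
  assumes ab: "a \<le> b" "b \<le> N" and D: "D < n"
    and z0: "valid_pos (stack b) z0" and y0: "valid_pos (stack b) y0"
    and tk: "take D z0 = take D y0" and ix: "z0 ! D = y0 ! D + 1"
    and never_top: "\<forall>i. a \<le> i \<longrightarrow> i < b \<longrightarrow> take (Suc D) (hist i b y0) \<noteq> take (Suc D) (top_pos i)"
  shows "take D (hist a b z0) = take D (hist a b y0) \<and> hist a b z0 ! D = hist a b y0 ! D + 1"
  using ab(1) never_top
proof (induction a rule: inc_induct)
  case base
  then show ?case using hist_refl[OF ab(2)] tk ix by simp
next
  case (step a)
  have ab': "a < b" "Suc a \<le> b" using step.hyps by auto
  have IH: "take D (hist (Suc a) b z0) = take D (hist (Suc a) b y0)"
    "hist (Suc a) b z0 ! D = hist (Suc a) b y0 ! D + 1"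
    using step.IH step.prems by auto
  have so: "dpda_step n \<delta> (R ! a) (R ! Suc a)" using step_at ab' ab(2) by simp
  have v: "valid_pos (snd (R ! Suc a)) (hist (Suc a) b z0)" "valid_pos (snd (R ! Suc a)) (hist (Suc a) b y0)"
    using valid_pos_hist[of "Suc a" b] ab' ab(2) z0 y0 by (simp_all add: stack_def)
  have ne: "hist_step n \<delta> (R ! a) (R ! Suc a) (take (Suc D) (hist (Suc a) b y0)) \<noteq> take (Suc D) (toppath (snd (R ! a)))"
    using hist_step_not_top[OF ab'(1) ab(2)] step.prems ab' by simp
  show ?case
    using hist_step_successor[OF so D v IH ne] hist_Suc[OF ab'(1) ab(2)] by simp
qed

section \<open>The first step of a return\<close>

lemma returns_target_not_top:
  assumes "a \<le> N" "1 \<le> r" "r \<le> n"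
    and "take (Suc (n - r)) X = take (n - r) (top_pos a) @ [top_pos a ! (n - r) - 1]"
  shows "take (Suc (n - r)) X \<noteq> take (Suc (n - r)) (top_pos a)"
  using assms take_Suc_decr_neq[of "n - r" "top_pos a"] valid_pos_top_pos(2)[of a] top_pos_nth_gt_0[of a "n - r"]
  by simp

lemma returns_less: "returns r a b \<Longrightarrow> a \<le> b \<Longrightarrow> b \<le> N \<Longrightarrow> 1 \<le> r \<Longrightarrow> r \<le> n \<Longrightarrow> a < b"
  using returns_target_not_top[of a r "top_pos a"] hist_refl[of a]
  unfolding returns_def by (metis le_less)

lemma returns_from_target:
  assumes r: "1 \<le> r" "r \<le> n" and ab: "a < b" "b \<le> N"
    and target: "take (Suc (n - r)) (hist a b (top_pos b)) = take (n - r) (top_pos a) @ [top_pos a ! (n - r) - 1]"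
    and never_top: "\<forall>i. a < i \<longrightarrow> i < b \<longrightarrow> take (Suc (n - r)) (hist i b (top_pos b)) \<noteq> take (Suc (n - r)) (top_pos i)"
  shows "returns r a b"
proof -
  have v: "valid_pos (stack a) (hist a b (top_pos b))" and l: "length (hist a b (top_pos b)) = n"
    using valid_pos_hist length_hist valid_pos_top_pos ab by auto
  have "hist a b (top_pos b) ! (n - r) = top_pos a ! (n - r) - 1"
    using target l r by (auto simp: take_Suc_conv_app_nth)
  moreover have "0 < hist a b (top_pos b) ! (n - r)" using valid_pos_nth_gt_0[OF v] l r by simp
  ultimately have "2 \<le> top_pos a ! (n - r)" by simp
  moreover have "take (Suc (n - r)) (hist a b (top_pos b)) \<noteq> take (Suc (n - r)) (top_pos a)"
    using returns_target_not_top[OF _ r target] ab by simp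
  ultimately show ?thesis
    unfolding returns_def using target never_top by (metis le_neq_implies_less)
qed

lemma first_step: "1 \<le> N \<Longrightarrow> dpda_step n \<delta> (R ! 0) (R ! 1)"
  using step_at[of 0] by simp

lemma hist_0_N: "1 \<le> N \<Longrightarrow> hist 0 N x = hist_step n \<delta> (R ! 0) (R ! 1) (hist 1 N x)"
  using hist_Suc[of 0 N] by simp

lemma first_step_read:
  assumes N1: "1 \<le> N" and t: "trans_at \<delta> (R ! 0) = Some (Read f)"
  shows "top_pos 1 = top_pos 0" "hist 0 N x = hist 1 N x"
  using read_step[OF first_step[OF N1] t] hist_0_N[OF N1] by (simp_all add: top_pos_def stack_def)

lemma first_step_pop:
  assumes N1: "1 \<le> N" and t: "trans_at \<delta> (R ! 0) = Some (Op q (Pop k))"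
  shows "1 \<le> k" "k \<le> n" "pop_d (n - k) (stack 0) = Some (stack 1)" "hist 0 N x = hist 1 N x"
    "take (Suc (n - k)) (top_pos 1) = take (n - k) (top_pos 0) @ [top_pos 0 ! (n - k) - 1]"
proof -
  from pop_step[OF first_step[OF N1] t]
  show k: "1 \<le> k" "k \<le> n" and pop: "pop_d (n - k) (stack 0) = Some (stack 1)"
    and "hist 0 N x = hist 1 N x"
    using hist_0_N[OF N1] by (simp_all add: stack_nth)
  show "take (Suc (n - k)) (top_pos 1) = take (n - k) (top_pos 0) @ [top_pos 0 ! (n - k) - 1]"
    using toppath_pop_d[OF proper_stack_at[of 0] _ pop] k unfolding top_pos_def by simp
qed

lemma first_step_push:
  assumes N1: "1 \<le> N" and t: "trans_at \<delta> (R ! 0) = Some (Op q (Push k g))"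
  shows "1 \<le> k" "k \<le> n" "top_pos 1 = (top_pos 0)[n - k := top_pos 0 ! (n - k) + 1]"
    "hist_step n \<delta> (R ! 0) (R ! 1) x =
       (if take (Suc (n - k)) x = take (Suc (n - k)) (top_pos 1) then x[n - k := x ! (n - k) - 1] else x)"
    "i \<noteq> n - k \<Longrightarrow> top_pos 1 ! i = top_pos 0 ! i" "top_pos 1 ! (n - k) = top_pos 0 ! (n - k) + 1"
proof -
  from push_step[OF first_step[OF N1] t]
  show k: "1 \<le> k" "k \<le> n" and top: "top_pos 1 = (top_pos 0)[n - k := top_pos 0 ! (n - k) + 1]"
    and "hist_step n \<delta> (R ! 0) (R ! 1) x =
       (if take (Suc (n - k)) x = take (Suc (n - k)) (top_pos 1) then x[n - k := x ! (n - k) - 1] else x)"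
    by (simp_all add: stack_nth toppath_stack)
  show "i \<noteq> n - k \<Longrightarrow> top_pos 1 ! i = top_pos 0 ! i" "top_pos 1 ! (n - k) = top_pos 0 ! (n - k) + 1"
    using top k valid_pos_top_pos(2)[of 0] by simp_all
qed

lemma returns_shift_iff:
  assumes r: "1 \<le> r" "r \<le> n" and N1: "1 \<le> N"
    and top: "take (Suc (n - r)) (top_pos 1) = take (Suc (n - r)) (top_pos 0)"
    and hh: "take (Suc (n - r)) (hist 0 N (top_pos N)) = take (Suc (n - r)) (hist 1 N (top_pos N))"
  shows "returns r 0 N \<longleftrightarrow> returns r 1 N"
proof -
  have d0: "top_pos 1 ! (n - r) = top_pos 0 ! (n - r)" and t0: "take (n - r) (top_pos 1) = take (n - r) (top_pos 0)"
    using top valid_pos_top_pos(2)[of 0] valid_pos_top_pos(2)[of 1] N1 r by (auto simp: take_Suc_conv_app_nth)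
  show ?thesis
  proof
    assume "returns r 0 N"
    then show "returns r 1 N" unfolding returns_def using d0 t0 hh by auto
  next
    assume h: "returns r 1 N"
    then have "take (Suc (n - r)) (hist 0 N (top_pos N)) = take (n - r) (top_pos 0) @ [top_pos 0 ! (n - r) - 1]"
      unfolding returns_def using d0 t0 hh by auto
    moreover have "\<forall>i. 0 < i \<longrightarrow> i < N \<longrightarrow> take (Suc (n - r)) (hist i N (top_pos N)) \<noteq> take (Suc (n - r)) (top_pos i)"
      using h unfolding returns_def by auto
    ultimately show "returns r 0 N" using returns_from_target[OF r] N1 by simp
  qed
qed

lemma returns_read_iff:
  assumes r: "1 \<le> r" "r \<le> n" and N1: "1 \<le> N" and t: "trans_at \<delta> (R ! 0) = Some (Read f)"
  shows "returns r 0 N \<longleftrightarrow> returns r 1 N"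
  using returns_shift_iff[OF r N1] first_step_read[OF N1 t] by simp

lemma returns_pop_lower_iff:
  assumes r: "1 \<le> r" "r \<le> n" and N1: "1 \<le> N"
    and t: "trans_at \<delta> (R ! 0) = Some (Op q (Pop k))" and kr: "k < r"
  shows "returns r 0 N \<longleftrightarrow> returns r 1 N"
proof (rule returns_shift_iff[OF r N1])
  note pop = first_step_pop[OF N1 t]
  have "take (Suc (n - r)) (top_pos 1) = take (Suc (n - r)) (take (Suc (n - k)) (top_pos 1))"
    using kr by (simp add: min_def)
  also have "\<dots> = take (Suc (n - r)) (top_pos 0)"
    using pop(5) kr r valid_pos_top_pos(2)[of 0] by (simp add: min_def, linarith)
  finally show "take (Suc (n - r)) (top_pos 1) = take (Suc (n - r)) (top_pos 0)" .
  show "take (Suc (n - r)) (hist 0 N (top_pos N)) = take (Suc (n - r)) (hist 1 N (top_pos N))"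
    using pop(4) by simp
qed

lemma returns_push_lower_iff:
  assumes r: "1 \<le> r" "r \<le> n" and N1: "1 \<le> N"
    and t: "trans_at \<delta> (R ! 0) = Some (Op q (Push k g))" and kr: "k < r"
  shows "returns r 0 N \<longleftrightarrow> returns r 1 N"
proof (rule returns_shift_iff[OF r N1])
  note push = first_step_push[OF N1 t]
  have D: "Suc (n - r) \<le> n - k" using kr r by simp
  show "take (Suc (n - r)) (top_pos 1) = take (Suc (n - r)) (top_pos 0)"
    using push(3) D by (simp add: take_update_cancel)
  show "take (Suc (n - r)) (hist 0 N (top_pos N)) = take (Suc (n - r)) (hist 1 N (top_pos N))"
    using hist_0_N[OF N1] push(4) D by (simp add: take_update_cancel)
qed

lemma returns_pop_same_imp_single:
  assumes r: "1 \<le> r" "r \<le> n" and N1: "1 \<le> N"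
    and t: "trans_at \<delta> (R ! 0) = Some (Op q (Pop r))" and h: "returns r 0 N"
  shows "N = 1"
proof (rule ccontr)
  assume "N \<noteq> 1"
  with N1 have "1 < N" by simp
  moreover have "take (Suc (n - r)) (hist 1 N (top_pos N)) = take (Suc (n - r)) (top_pos 1)"
    using h first_step_pop[OF N1 t] unfolding returns_def by simp
  ultimately show False using h unfolding returns_def by auto
qed

lemma returns_single_pop:
  assumes r: "1 \<le> r" "r \<le> n" and N1: "N = 1" and t: "trans_at \<delta> (R ! 0) = Some (Op q (Pop r))"
  shows "returns r 0 N"
proof -
  have "1 \<le> N" using N1 by simp
  note pop = first_step_pop[OF this t]
  show ?thesis using returns_from_target[OF r, of 0 N] pop(4,5) hist_refl[of 1] N1 by simp
qed

lemma not_returns_pop_higher: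
  assumes r: "1 \<le> r" "r \<le> n" and N1: "1 \<le> N"
    and t: "trans_at \<delta> (R ! 0) = Some (Op q (Pop k))" and kr: "r < k"
  shows "\<not> returns r 0 N"
proof
  assume h: "returns r 0 N"
  note pop = first_step_pop[OF N1 t]
  have D: "n - k < n - r" using kr r pop(2) by auto
  have "valid_pos (stack 1) (hist 1 N (top_pos N))" using valid_pos_hist valid_pos_top_pos N1 by simp
  from valid_pos_pop_d[OF proper_stack_at[of 0] _ pop(3) this] D
  have "take (Suc (n - k)) (hist 1 N (top_pos N)) \<noteq> take (Suc (n - k)) (top_pos 0)"
    unfolding top_pos_def by simp
  moreover from h pop(4) have "take (Suc (n - r)) (hist 1 N (top_pos N)) = take (n - r) (top_pos 0) @ [top_pos 0 ! (n - r) - 1]"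
    unfolding returns_def by simp
  then have "take (Suc (n - k)) (take (Suc (n - r)) (hist 1 N (top_pos N))) = take (Suc (n - k)) (take (n - r) (top_pos 0))"
    using D valid_pos_top_pos(2)[of 0] by simp
  then have "take (Suc (n - k)) (hist 1 N (top_pos N)) = take (Suc (n - k)) (top_pos 0)"
    using D by (simp add: min_def)
  ultimately show False by simp
qed

lemma returns_push_higher_if_tail:
  assumes r: "1 \<le> r" "r \<le> n" and N1: "1 \<le> N"
    and t: "trans_at \<delta> (R ! 0) = Some (Op q (Push k g))" and kr: "r < k" and h: "returns r 1 N"
  shows "returns r 0 N"
proof -
  note push = first_step_push[OF N1 t]
  define d where "d = n - r"
  define D where "D = n - k"
  have Dd: "D < d" "d < n" using kr r push(2) by (auto simp: d_def D_def)
  let ?A1 = "hist 1 N (top_pos N)" and ?A0 = "hist 0 N (top_pos N)"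
  have l: "length ?A1 = n" "length (top_pos 0) = n" "length (top_pos 1) = n"
    using length_hist valid_pos_top_pos N1 by auto
  from h have A1: "\<forall>i<d. ?A1 ! i = top_pos 1 ! i" "?A1 ! d = top_pos 1 ! d - 1"
    and never_top: "\<forall>i. 0 < i \<longrightarrow> i < N \<longrightarrow> take (Suc d) (hist i N (top_pos N)) \<noteq> take (Suc d) (top_pos i)"
    unfolding returns_def d_def using take_Suc_eq_snoc_iff[of "n - r" ?A1 "top_pos 1"] l Dd d_def by auto
  have "take (Suc D) ?A1 = take (Suc D) (top_pos 1)"
    using take_Suc_eq_take_Suc_iff[of D ?A1 "top_pos 1"] A1 l Dd by auto
  then have A0: "?A0 = ?A1[D := ?A1 ! D - 1]" using hist_0_N[OF N1] push(4) by (simp add: D_def)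
  have "\<forall>i<d. ?A0 ! i = top_pos 0 ! i" "?A0 ! d = top_pos 0 ! d - 1"
    using A0 A1 push(5,6) l Dd by (auto simp: nth_list_update D_def)
  then have "take (Suc d) ?A0 = take d (top_pos 0) @ [top_pos 0 ! d - 1]"
    using take_Suc_eq_snoc_iff[of d ?A0 "top_pos 0"] A0 l Dd by simp
  then show ?thesis using returns_from_target[OF r] N1 never_top unfolding d_def by simp
qed

section \<open>A first step of order at least \<open>r\<close>\<close>

lemma returns_hist_below:
  assumes ret: "returns k a b" and ab: "a \<le> i" "i \<le> b" "b \<le> N" and k: "1 \<le> k" "k \<le> n"
  shows "\<And>y. valid_pos (stack b) y \<Longrightarrow> take (n - k) y = take (n - k) (top_pos b) \<Longrightarrow>
      y ! (n - k) \<le> top_pos b ! (n - k) \<Longrightarrow>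
      hist i b y = take (n - k) (hist i b (top_pos b)) @ drop (n - k) y"
    and "hist i b (top_pos b) ! (n - k) = top_pos b ! (n - k)"
    and "substack (stack i) (take (Suc (n - k)) (hist i b (top_pos b))) =
      substack (stack b) (take (Suc (n - k)) (top_pos b))"
proof -
  have D: "n - k < n" using k by simp
  have nt: "\<forall>i'. i \<le> i' \<longrightarrow> i' < b \<longrightarrow>
      take (Suc (n - k)) (hist i' b (top_pos b)) \<noteq> take (Suc (n - k)) (top_pos i')"
    using ret ab unfolding returns_def by auto
  note below = hist_below_top[OF ab(2,3) D valid_pos_top_pos(1)[OF ab(3)] nt]
  show "\<And>y. valid_pos (stack b) y \<Longrightarrow> take (n - k) y = take (n - k) (top_pos b) \<Longrightarrow>
      y ! (n - k) \<le> top_pos b ! (n - k) \<Longrightarrow>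
      hist i b y = take (n - k) (hist i b (top_pos b)) @ drop (n - k) y"
    by (rule below)
  have "hist i b (top_pos b) ! (n - k) =
      (take (n - k) (hist i b (top_pos b)) @ drop (n - k) (top_pos b)) ! (n - k)"
    using below[OF valid_pos_top_pos(1)[OF ab(3)] refl order.refl] by simp
  also have "\<dots> = top_pos b ! (n - k)"
    using length_hist[OF ab(2,3) valid_pos_top_pos(1)[OF ab(3)]] valid_pos_top_pos(2)[OF ab(3)] D
    by (simp add: nth_append)
  finally show "hist i b (top_pos b) ! (n - k) = top_pos b ! (n - k)" .
  show "substack (stack i) (take (Suc (n - k)) (hist i b (top_pos b))) =
      substack (stack b) (take (Suc (n - k)) (top_pos b))"
    by (rule substack_hist_below_top[OF ab(2,3) D valid_pos_top_pos(1)[OF ab(3)] nt])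
qed

lemma top_pos_eq_below_substack:
  assumes ab: "a \<le> N" "b \<le> N" and D: "D < n"
    and sub: "substack (stack a) (take (Suc D) (top_pos a)) = substack (stack b) (take (Suc D) (top_pos b))"
    and i: "Suc D \<le> i" "i < n"
  shows "top_pos a ! i = top_pos b ! i"
proof -
  have drop: "drop (Suc D) (top_pos x) = toppath (substack (stack x) (take (Suc D) (top_pos x)))"
    if "x \<le> N" for x
  proof -
    have "top_pos x = take (Suc D) (top_pos x) @ toppath (substack (stack x) (take (Suc D) (top_pos x)))"
      using toppath_substack[OF proper_stack_at[OF that], of "Suc D"] D unfolding top_pos_def by simp
    then have "drop (Suc D) (top_pos x) =
        drop (Suc D) (take (Suc D) (top_pos x) @ toppath (substack (stack x) (take (Suc D) (top_pos x))))"
      by (rule arg_cong)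
    then show ?thesis using valid_pos_top_pos(2)[OF that] D by simp
  qed
  have "drop (Suc D) (top_pos a) ! (i - Suc D) = drop (Suc D) (top_pos b) ! (i - Suc D)"
    using drop[OF ab(1)] drop[OF ab(2)] sub by simp
  then show ?thesis using valid_pos_top_pos(2)[OF ab(1)] valid_pos_top_pos(2)[OF ab(2)] i by simp
qed

text \<open>After a first step \<open>push\<^sup>k\<close>, a \<open>k\<close>-return \<open>R[1, j]\<close> restores the top of \<open>R(0)\<close> from coordinate
  \<open>D = n - k\<close> on; the part of the run up to \<open>j\<close> never touches the stacks below.\<close>

context
  fixes k q g j D
  assumes push: "trans_at \<delta> (R ! 0) = Some (Op q (Push k g))"
    and j: "1 \<le> j" "j \<le> N" and S: "returns k 1 j" and D: "D = n - k"
begin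

lemma push_return_bounds: "1 \<le> k" "k \<le> n" "D < n"
  using first_step_push[OF _ push] j D by auto

lemma push_return_head:
  "take (Suc D) (hist 1 j (top_pos j)) = take (Suc D) (top_pos 0)" "top_pos j ! D = top_pos 0 ! D"
proof -
  let ?G = "hist 1 j (top_pos j)"
  have N1: "1 \<le> N" using j by simp
  have l: "length ?G = n" "length (top_pos 0) = n" "length (top_pos 1) = n"
    using length_hist valid_pos_top_pos j by auto
  have "take (Suc D) ?G = take D (top_pos 1) @ [top_pos 1 ! D - 1]"
    using S unfolding returns_def D by simp
  then have "\<forall>i<D. ?G ! i = top_pos 1 ! i" "?G ! D = top_pos 1 ! D - 1"
    using take_Suc_eq_snoc_iff[of D ?G "top_pos 1" "top_pos 1 ! D - 1"] l push_return_bounds by auto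
  then have "\<forall>i\<le>D. ?G ! i = top_pos 0 ! i"
    using first_step_push(5,6)[OF N1 push] D by (auto simp: le_less)
  then show head: "take (Suc D) ?G = take (Suc D) (top_pos 0)"
    using take_Suc_eq_take_Suc_iff[of D ?G "top_pos 0"] l push_return_bounds by simp
  have "top_pos j ! D = ?G ! D"
    using returns_hist_below(2)[OF S order.refl j(1,2) push_return_bounds(1,2)] D by simp
  also have "\<dots> = take (Suc D) (top_pos 0) ! D" using head[symmetric] by simp
  finally show "top_pos j ! D = top_pos 0 ! D" by simp
qed

lemma push_return_top_pos:
  assumes i: "D \<le> i" "i < n"
  shows "top_pos j ! i = top_pos 0 ! i"
proof (cases "i = D")
  case True
  then show ?thesis using push_return_head(2) by simp
next
  case False
  let ?G = "take (Suc D) (hist 1 j (top_pos j))"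
  have N1: "1 \<le> N" using j by simp
  have "take (Suc D) (top_pos 0) \<noteq> take (Suc D) (top_pos 1)"
  proof
    assume "take (Suc D) (top_pos 0) = take (Suc D) (top_pos 1)"
    then have "take (Suc D) (top_pos 0) ! D = take (Suc D) (top_pos 1) ! D" by simp
    then show False using first_step_push(6)[OF N1 push] D by simp
  qed
  then have ne: "?G \<noteq> take (Suc D) (toppath (snd (R ! 1)))"
    using push_return_head(1) by (simp add: stack_nth toppath_stack)
  have v: "valid_pos (snd (R ! 1)) (hist 1 j (top_pos j))"
    using valid_pos_hist[of 1 j] valid_pos_top_pos(1)[of j] j by (simp add: stack_def)
  have "substack (stack 1) ?G = substack (stack 0) (hist_step n \<delta> (R ! 0) (R ! 1) ?G)"
    using substack_hist_step_push[OF first_step[OF N1] push v _ ne] push_return_bounds D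
    by (simp add: stack_nth)
  also have "hist_step n \<delta> (R ! 0) (R ! 1) ?G = ?G"
    using first_step_push(4)[OF N1 push, of ?G] ne unfolding D by (simp add: stack_nth toppath_stack)
  finally have "substack (stack 0) (take (Suc D) (top_pos 0)) = substack (stack j) (take (Suc D) (top_pos j))"
    using returns_hist_below(3)[OF S order.refl j(1,2) push_return_bounds(1,2)] push_return_head(1)
    unfolding D by simp
  moreover have "D < n" "Suc D \<le> i" using push_return_bounds i False by auto
  ultimately show ?thesis
    using top_pos_eq_below_substack[of 0 j D i] i j by simp
qed

context
  fixes r d
  assumes r: "1 \<le> r" "r \<le> n" and kr: "r \<le> k" and T: "returns r j N" and d: "d = n - r"
begin

lemma compose_bounds: "1 \<le> k" "k \<le> n" "D \<le> d" "d < n"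
  using push_return_bounds kr r D d by auto

lemma compose_tail:
  "\<forall>i<d. hist j N (top_pos N) ! i = top_pos j ! i" "hist j N (top_pos N) ! d = top_pos j ! d - 1"
  "take D (hist j N (top_pos N)) = take D (top_pos j)" "hist j N (top_pos N) ! D \<le> top_pos j ! D"
proof -
  have l: "length (hist j N (top_pos N)) = n" "length (top_pos j) = n"
    using length_hist valid_pos_top_pos j by auto
  have "take (Suc d) (hist j N (top_pos N)) = take d (top_pos j) @ [top_pos j ! d - 1]"
    using T unfolding returns_def d by simp
  then show tail: "\<forall>i<d. hist j N (top_pos N) ! i = top_pos j ! i" "hist j N (top_pos N) ! d = top_pos j ! d - 1"
    using take_Suc_eq_snoc_iff[of d "hist j N (top_pos N)" "top_pos j" "top_pos j ! d - 1"] l compose_bounds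
    by auto
  then show "take D (hist j N (top_pos N)) = take D (top_pos j)"
    using take_eq_take_iff_nth[of D "hist j N (top_pos N)" "top_pos j"] l compose_bounds by simp
  show "hist j N (top_pos N) ! D \<le> top_pos j ! D"
    using tail compose_bounds by (cases "D = d") auto
qed

lemma compose_hist_split:
  assumes i: "1 \<le> i" "i \<le> j"
  shows "hist i N (top_pos N) = take D (hist i j (top_pos j)) @ drop D (hist j N (top_pos N))"
proof -
  have v: "valid_pos (stack j) (hist j N (top_pos N))"
    using valid_pos_hist[of j N] valid_pos_top_pos(1)[of N] j by simp
  have "hist i N (top_pos N) = hist i j (hist j N (top_pos N))"
    using hist_trans[of i j N] i j by simp
  also have "\<dots> = take D (hist i j (top_pos j)) @ drop D (hist j N (top_pos N))"
    using returns_hist_below(1)[OF S i j(2) compose_bounds(1,2) v] compose_tail(3,4) unfolding D by simp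
  finally show ?thesis .
qed

lemma compose_first_step: "hist 0 N (top_pos N) = hist 1 N (top_pos N)"
proof -
  have N1: "1 \<le> N" using j by simp
  have l: "length (hist 1 N (top_pos N)) = n" "length (top_pos 1) = n"
    using length_hist valid_pos_top_pos N1 by auto
  have "hist 1 N (top_pos N) ! D = hist j N (top_pos N) ! D"
    using compose_hist_split[OF order.refl j(1)] length_hist valid_pos_top_pos j compose_bounds
    by (simp add: nth_append)
  also have "\<dots> < top_pos 1 ! D"
    using compose_tail(4) push_return_head(2) first_step_push(6)[OF N1 push] D by simp
  finally have "take (Suc D) (hist 1 N (top_pos N)) \<noteq> take (Suc D) (top_pos 1)"
    using l compose_bounds by (metis lessI less_irrefl nth_take)
  then show ?thesis using hist_0_N[OF N1] first_step_push(4)[OF N1 push] D by simp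
qed

lemma compose_target:
  "take (Suc d) (hist 0 N (top_pos N)) = take d (top_pos 0) @ [top_pos 0 ! d - 1]"
proof -
  let ?h = "hist 0 N (top_pos N)"
  have l: "length (hist 1 j (top_pos j)) = n" "length (hist j N (top_pos N)) = n"
    "length (top_pos 0) = n"
    using length_hist valid_pos_top_pos j by auto
  have h: "?h = take D (hist 1 j (top_pos j)) @ drop D (hist j N (top_pos N))"
    using compose_first_step compose_hist_split[OF order.refl j(1)] by simp
  have "?h ! i = top_pos 0 ! i" if "i < d" for i
  proof (cases "i < D")
    case True
    have "?h ! i = hist 1 j (top_pos j) ! i"
      using h l compose_bounds True by (simp add: nth_append)
    also have "\<dots> = take (Suc D) (hist 1 j (top_pos j)) ! i" using True by simp
    also have "\<dots> = top_pos 0 ! i" using push_return_head(1) True by simp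
    finally show ?thesis .
  next
    case False
    then show ?thesis using h l that compose_tail(1) push_return_top_pos compose_bounds
      by (simp add: nth_append)
  qed
  moreover have "?h ! d = top_pos 0 ! d - 1"
    using h l compose_tail(2) push_return_top_pos compose_bounds by (simp add: nth_append)
  moreover have "length ?h = n" using length_hist valid_pos_top_pos by simp
  ultimately show ?thesis
    using take_Suc_eq_snoc_iff[of d ?h "top_pos 0" "top_pos 0 ! d - 1"] l(3) compose_bounds by simp
qed

text \<open>A configuration inside \<open>R[1, j]\<close> cannot carry the history of the final top: the history agrees
  below \<open>D\<close> with that of \<open>top_pos j\<close> and is at most as high in coordinate \<open>D\<close>, and the
  \<open>k\<close>-return \<open>R[1, j]\<close> never reaches its topmost \<open>(k - 1)\<close>-stack.\<close>

lemma compose_never_top: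
  assumes i: "0 < i" "i < N"
  shows "take (Suc d) (hist i N (top_pos N)) \<noteq> take (Suc d) (top_pos i)"
proof (cases "i < j")
  case False
  then show ?thesis using T i unfolding returns_def d by auto
next
  case True
  let ?G = "hist i j (top_pos j)" and ?h = "hist i N (top_pos N)"
  have l: "length ?G = n" "length (hist j N (top_pos N)) = n" "length (top_pos i) = n" "length ?h = n"
    using length_hist valid_pos_top_pos True j i by auto
  have h: "?h = take D ?G @ drop D (hist j N (top_pos N))"
    using compose_hist_split[of i] True i by simp
  have hG: "?h ! i' = ?G ! i'" if "i' < D" for i'
    using h l compose_bounds that by (simp add: nth_append)
  have hD: "?h ! D = hist j N (top_pos N) ! D"
    using h l compose_bounds by (simp add: nth_append)
  have G: "?G ! D = top_pos j ! D"
    using returns_hist_below(2)[OF S _ _ j(2) compose_bounds(1,2)] True i D by simp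
  have S_never_top: "take (Suc D) ?G \<noteq> take (Suc D) (top_pos i)"
    using S True i unfolding returns_def D by auto
  show ?thesis
  proof
    assume "take (Suc d) ?h = take (Suc d) (top_pos i)"
    then have eq: "\<forall>i'\<le>d. ?h ! i' = top_pos i ! i'"
      using take_Suc_eq_take_Suc_iff[of d ?h "top_pos i"] l compose_bounds by simp
    have "\<forall>i'<D. ?G ! i' = top_pos i ! i'"
    proof (intro allI impI)
      fix i' assume "i' < D"
      then show "?G ! i' = top_pos i ! i'" using hG eq compose_bounds by simp
    qed
    then have below: "take D ?G = take D (top_pos i)"
      using take_eq_take_iff_nth[of D ?G "top_pos i"] l compose_bounds by simp
    have "valid_pos (stack i) ?G" using valid_pos_hist valid_pos_top_pos True j by simp
    then have "?G ! D \<le> top_pos i ! D"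
      using valid_pos_nth_le_toppath[OF proper_stack_at[of i], of ?G D] below i compose_bounds
      unfolding top_pos_def by simp
    moreover have "top_pos i ! D = hist j N (top_pos N) ! D" using eq hD compose_bounds by simp
    ultimately have "?G ! D = top_pos i ! D" using G compose_tail(4) by simp
    then have "take (Suc D) ?G = take (Suc D) (top_pos i)"
      using below l compose_bounds by (simp add: take_Suc_conv_app_nth)
    then show False using S_never_top by simp
  qed
qed

lemma returns_push_compose: "returns r 0 N"
  using returns_from_target[OF r _ _ compose_target[unfolded d]] compose_never_top[unfolded d] j by simp

end

end

text \<open>Splitting, \<open>k > r\<close>: either the topmost \<open>(k - 1)\<close>-stack created by the first step \<open>push\<^sup>k\<close> is
  never returned from, and then \<open>R[1, N]\<close> is already an \<open>r\<close>-return, or the first configuration \<open>j\<close>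
  whose topmost \<open>(k - 1)\<close>-stack carries the history of the final top ends a \<open>k\<close>-return \<open>R[1, j]\<close>.\<close>

context
  fixes r k q g D d
  assumes r: "1 \<le> r" "r \<le> n" and push: "trans_at \<delta> (R ! 0) = Some (Op q (Push k g))"
    and kr: "r < k" and h: "returns r 0 N" and D: "D = n - k" and d: "d = n - r"
begin

lemma split_bounds: "1 \<le> N" "1 \<le> k" "k \<le> n" "D < d" "d < n"
proof -
  show N1: "1 \<le> N" using returns_less[OF h _ _ r] by simp
  show "1 \<le> k" "k \<le> n" "D < d" "d < n" using first_step_push(1,2)[OF N1 push] kr r D d by auto
qed

lemma split_target: "\<forall>i<d. hist 0 N (top_pos N) ! i = top_pos 0 ! i" "hist 0 N (top_pos N) ! d = top_pos 0 ! d - 1"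
proof -
  have "take (Suc d) (hist 0 N (top_pos N)) = take d (top_pos 0) @ [top_pos 0 ! d - 1]"
    using h unfolding returns_def d by simp
  moreover have "length (hist 0 N (top_pos N)) = n" "length (top_pos 0) = n"
    using length_hist valid_pos_top_pos by auto
  ultimately show "\<forall>i<d. hist 0 N (top_pos N) ! i = top_pos 0 ! i" "hist 0 N (top_pos N) ! d = top_pos 0 ! d - 1"
    using take_Suc_eq_snoc_iff[of d "hist 0 N (top_pos N)" "top_pos 0" "top_pos 0 ! d - 1"] split_bounds
    by auto
qed

lemma split_returns_tail:
  assumes C: "take (Suc D) (hist 1 N (top_pos N)) = take (Suc D) (top_pos 1)"
  shows "returns r 1 N"
proof -
  let ?h = "hist 1 N (top_pos N)"
  note push = first_step_push[OF split_bounds(1) push]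
  have l: "length ?h = n" "length (top_pos 1) = n"
    using length_hist valid_pos_top_pos split_bounds by auto
  have h0: "hist 0 N (top_pos N) = ?h[D := ?h ! D - 1]"
    using hist_0_N[OF split_bounds(1)] push(4) C D by simp
  have hD: "?h ! D = top_pos 1 ! D"
    using C take_Suc_eq_take_Suc_iff[of D ?h "top_pos 1"] l split_bounds by simp
  have "\<forall>i<d. ?h ! i = top_pos 1 ! i"
  proof (intro allI impI)
    fix i assume "i < d"
    then show "?h ! i = top_pos 1 ! i"
      using hD h0 split_target(1) push(5) D by (cases "i = D") auto
  qed
  moreover have "?h ! d = top_pos 1 ! d - 1"
    using h0 split_target(2) push(5) split_bounds D by simp
  ultimately have "take (Suc d) ?h = take d (top_pos 1) @ [top_pos 1 ! d - 1]"
    using take_Suc_eq_snoc_iff[of d ?h "top_pos 1" "top_pos 1 ! d - 1"] l split_bounds by simp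
  moreover have "2 \<le> top_pos 1 ! d" using h push(5) split_bounds D d unfolding returns_def by simp
  ultimately show ?thesis using h unfolding returns_def d by auto
qed

lemma split_first_step:
  assumes nC: "take (Suc D) (hist 1 N (top_pos N)) \<noteq> take (Suc D) (top_pos 1)"
  shows "hist 0 N (top_pos N) = hist 1 N (top_pos N)"
  using hist_0_N[OF split_bounds(1)] first_step_push(4)[OF split_bounds(1) push] nC D by simp

context
  fixes j
  assumes nC: "take (Suc D) (hist 1 N (top_pos N)) \<noteq> take (Suc D) (top_pos 1)"
    and j: "1 \<le> j" "j \<le> N" and top_j: "take (Suc D) (hist j N (top_pos N)) = take (Suc D) (top_pos j)"
    and first: "\<And>i. 1 \<le> i \<Longrightarrow> i < j \<Longrightarrow> take (Suc D) (hist i N (top_pos N)) \<noteq> take (Suc D) (top_pos i)"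
begin

lemma split_prefix:
  assumes i: "1 \<le> i" "i \<le> j"
  shows "take (Suc D) (hist i j (top_pos j)) = take (Suc D) (hist i N (top_pos N))"
proof -
  have "take (Suc D) (hist i j (top_pos j)) = take (Suc D) (hist i j (hist j N (top_pos N)))"
    using hist_take_cong[of i j "Suc D" "top_pos j" "hist j N (top_pos N)"] i j top_j by simp
  also have "\<dots> = take (Suc D) (hist i N (top_pos N))" using hist_trans[of i j N] i j by simp
  finally show ?thesis .
qed

lemma split_returns_head: "returns k 1 j"
proof -
  note push = first_step_push[OF split_bounds(1) push]
  have l: "length (top_pos 0) = n" "length (top_pos 1) = n"
    using valid_pos_top_pos split_bounds by auto
  have "take (Suc D) (hist 1 j (top_pos j)) = take (Suc D) (take (Suc d) (hist 0 N (top_pos N)))"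
    using split_prefix[of 1] split_first_step[OF nC] j split_bounds by (simp add: min_def)
  also have "\<dots> = take (Suc D) (top_pos 0)"
    using h split_bounds l unfolding returns_def d by (simp add: min_def)
  also have "\<dots> = take D (top_pos 1) @ [top_pos 1 ! D - 1]"
    using take_Suc_eq_snoc_iff[of D "top_pos 0" "top_pos 1" "top_pos 1 ! D - 1"] push(5,6) l split_bounds D
    by simp
  finally have "take (Suc (n - k)) (hist 1 j (top_pos j)) = take (n - k) (top_pos 1) @ [top_pos 1 ! (n - k) - 1]"
    using D by simp
  moreover have "2 \<le> top_pos 1 ! (n - k)"
    using push(6) top_pos_nth_gt_0[of 0 "n - k"] split_bounds by simp
  moreover have "\<forall>i. 1 \<le> i \<longrightarrow> i < j \<longrightarrow> take (Suc (n - k)) (hist i j (top_pos j)) \<noteq> take (Suc (n - k)) (top_pos i)"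
    using first split_prefix D by simp
  ultimately show ?thesis unfolding returns_def by blast
qed

lemma split_returns_rest: "returns r j N"
proof -
  let ?hj = "hist j N (top_pos N)" and ?h1 = "hist 1 N (top_pos N)"
  have l: "length ?hj = n" "length (hist 1 j (top_pos j)) = n" "length (top_pos j) = n"
    using length_hist valid_pos_top_pos j by auto
  have hj: "\<forall>i\<le>D. ?hj ! i = top_pos j ! i"
    using top_j take_Suc_eq_take_Suc_iff[of D ?hj "top_pos j"] l split_bounds by simp
  have v: "valid_pos (stack j) ?hj" using valid_pos_hist valid_pos_top_pos j by simp
  have "?h1 = hist 1 j ?hj" using hist_trans[of 1 j N] j by simp
  also have "\<dots> = take D (hist 1 j (top_pos j)) @ drop D ?hj"
    using returns_hist_below(1)[OF split_returns_head order.refl j(1,2) split_bounds(2,3) v] hj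
      take_eq_take_iff_nth[of D ?hj "top_pos j"] l split_bounds D by simp
  finally have h1: "?h1 ! i = ?hj ! i" if "D \<le> i" for i
    using l split_bounds that by (simp add: nth_append)
  note top = push_return_top_pos[OF push j split_returns_head D]
  have "\<forall>i<d. ?hj ! i = top_pos j ! i"
  proof (intro allI impI)
    fix i assume "i < d"
    then show "?hj ! i = top_pos j ! i"
      using hj h1[of i] split_first_step[OF nC] split_target(1) top[of i] split_bounds by (cases "i \<le> D") auto
  qed
  moreover have "?hj ! d = top_pos j ! d - 1"
    using h1[of d] split_first_step[OF nC] split_target(2) top[of d] split_bounds by simp
  ultimately have "take (Suc d) ?hj = take d (top_pos j) @ [top_pos j ! d - 1]"
    using take_Suc_eq_snoc_iff[of d ?hj "top_pos j" "top_pos j ! d - 1"] l split_bounds by simp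
  moreover have "2 \<le> top_pos j ! d" using h top[of d] split_bounds unfolding returns_def d by simp
  ultimately show ?thesis using h j unfolding returns_def d by auto
qed

end

lemma returns_push_higher_split: "returns r 1 N \<or> (\<exists>j. 1 \<le> j \<and> j \<le> N \<and> returns k 1 j \<and> returns r j N)"
proof (cases "take (Suc D) (hist 1 N (top_pos N)) = take (Suc D) (top_pos 1)")
  case True
  then show ?thesis using split_returns_tail by simp
next
  case nC: False
  obtain j where j: "1 \<le> j" "j \<le> N" "take (Suc D) (hist j N (top_pos N)) = take (Suc D) (top_pos j)"
    and first: "\<And>i. 1 \<le> i \<Longrightarrow> i < j \<Longrightarrow> take (Suc D) (hist i N (top_pos N)) \<noteq> take (Suc D) (top_pos i)"
    using nat_first_index[of "\<lambda>i. take (Suc D) (hist i N (top_pos N)) = take (Suc D) (top_pos i)" N 1]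
      hist_refl split_bounds(1) by auto
  then show ?thesis using split_returns_head[OF nC j first] split_returns_rest[OF nC j first] by blast
qed

end

lemma exposure_keeps_below:
  assumes sm: "s < m" "m \<le> N" and F: "F < n" and x: "valid_pos (stack m) x"
    and exposed: "take (Suc F) (hist s m x) = take (Suc F) (top_pos s)"
    and later: "\<forall>i. s < i \<longrightarrow> i \<le> m \<longrightarrow> take (Suc F) (hist i m x) \<noteq> take (Suc F) (top_pos i)"
  shows "hist (Suc s) m x = take F (hist (Suc s) m x) @ drop F x"
    and "take (Suc F) (hist (Suc s) m x) = take (Suc F) (top_pos s)"
    and "substack (stack s) (take (Suc F) (top_pos s)) = substack (stack m) (take (Suc F) x)"
proof -
  have nt: "\<forall>i. Suc s \<le> i \<longrightarrow> i < m \<longrightarrow> take (Suc F) (hist i m x) \<noteq> take (Suc F) (top_pos i)"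
    using later by auto
  show "hist (Suc s) m x = take F (hist (Suc s) m x) @ drop F x"
    using hist_below_top[OF _ sm(2) F x nt x refl order.refl] sm by simp
  have v: "valid_pos (snd (R ! Suc s)) (hist (Suc s) m x)"
    using valid_pos_hist[of "Suc s" m x] sm x by (simp add: stack_def)
  have ne: "take (Suc F) (hist (Suc s) m x) \<noteq> take (Suc F) (toppath (snd (R ! Suc s)))"
    using later[rule_format, of "Suc s"] sm by (simp add: stack_nth toppath_stack)
  have "hist_step n \<delta> (R ! s) (R ! Suc s) (take (Suc F) (hist (Suc s) m x)) = take (Suc F) (toppath (snd (R ! s)))"
    using exposed take_hist_Suc[OF sm(1,2), of "Suc F" x] by (simp add: stack_nth toppath_stack)
  from hist_step_onto_top[OF step_at v F ne this] sm
  have "take (Suc F) (hist (Suc s) m x) = take (Suc F) (top_pos s)"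
    and "substack (stack (Suc s)) (take (Suc F) (hist (Suc s) m x)) = substack (stack s) (take (Suc F) (top_pos s))"
    by (auto simp: stack_nth toppath_stack)
  moreover have "substack (stack (Suc s)) (take (Suc F) (hist (Suc s) m x)) = substack (stack m) (take (Suc F) x)"
    using substack_hist_below_top[OF _ sm(2) F x nt] sm by simp
  ultimately show "take (Suc F) (hist (Suc s) m x) = take (Suc F) (top_pos s)"
    "substack (stack s) (take (Suc F) (top_pos s)) = substack (stack m) (take (Suc F) x)"
    by simp_all
qed

lemma hist_after_exposure_eq_top_pos:
  assumes sm: "s < m" "m \<le> N" and b: "b \<le> N" and F: "F < n" and v: "valid_pos (stack m) (top_pos b)"
    and exposed: "take (Suc F) (hist s m (top_pos b)) = take (Suc F) (top_pos s)"
    and later: "\<forall>i. s < i \<longrightarrow> i \<le> m \<longrightarrow> take (Suc F) (hist i m (top_pos b)) \<noteq> take (Suc F) (top_pos i)"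
    and sub: "substack (stack m) (take (Suc F) (top_pos b)) = substack (stack b) (take (Suc F) (top_pos b))"
  shows "hist (Suc s) m (top_pos b) = top_pos s"
proof (rule nth_equalityI)
  note below = exposure_keeps_below[OF sm F v exposed later]
  have l: "length (hist (Suc s) m (top_pos b)) = n" using length_hist v sm by simp
  then show "length (hist (Suc s) m (top_pos b)) = length (top_pos s)"
    using valid_pos_top_pos sm by simp
  fix i assume "i < length (hist (Suc s) m (top_pos b))"
  then have i: "i < n" using l by simp
  show "hist (Suc s) m (top_pos b) ! i = top_pos s ! i"
  proof (cases "i < Suc F")
    case True
    then show ?thesis using arg_cong[OF below(2), of "\<lambda>l. l ! i"] by simp
  next
    case False
    have "hist (Suc s) m (top_pos b) ! i = (take F (hist (Suc s) m (top_pos b)) @ drop F (top_pos b)) ! i"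
      using below(1) by (rule arg_cong)
    also have "\<dots> = top_pos b ! i"
      using False i l valid_pos_top_pos(2)[OF b] by (simp add: nth_append)
    also have "\<dots> = top_pos s ! i"
      using top_pos_eq_below_substack[of s b F i] below(3) sub False i sm b F by simp
    finally show ?thesis .
  qed
qed

text \<open>Let \<open>s\<close> be the last configuration before \<open>N - 1\<close> whose topmost \<open>(k - 1)\<close>-stack contains the
  history of the final top (\<open>R(0)\<close> is one). Afterwards the run does not touch that stack, so the
  history at \<open>s\<close> is the top of \<open>R(s)\<close> itself, which a return forbids.\<close>

lemma return_not_ending_with_higher_pop:
  assumes r: "1 \<le> r" "r \<le> n" and h: "returns r 0 N"
    and last: "trans_at \<delta> (R ! (N - 1)) = Some (Op q (Pop k))" and kr: "r < k"
  shows False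
proof -
  define m where "m = N - 1"
  define F where "F = n - k"
  have "1 \<le> N" using returns_less[OF h _ _ r] by simp
  then have mN: "Suc m = N" "m < N" using m_def by auto
  from pop_step[OF step_at[OF mN(2)] last[folded m_def]] mN
  have pop: "pop_d F (stack m) = Some (stack N)" and k: "k \<le> n" and id: "\<And>x. hist_step n \<delta> (R ! m) (R ! N) x = x"
    by (simp_all add: stack_nth F_def)
  have Fd: "F < n - r" "F < n" using kr k r F_def by auto
  have vN: "valid_pos (stack m) (top_pos N)"
    using valid_pos_pop_d[OF proper_stack_at[of m] _ pop valid_pos_top_pos(1)[of N]] Fd mN by simp
  have hist_m: "hist i N (top_pos N) = hist i m (top_pos N)" if "i \<le> m" for i
    using hist_trans[of i m N] hist_Suc[of m N] hist_refl[of N] id mN that by simp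
  let ?P = "\<lambda>i. take (Suc F) (hist i m (top_pos N)) = take (Suc F) (top_pos i)"
  have "take (Suc F) (hist 0 N (top_pos N)) = take (Suc F) (take (Suc (n - r)) (hist 0 N (top_pos N)))"
    using Fd by (simp add: min_def)
  also have "\<dots> = take (Suc F) (top_pos 0)"
    using h Fd valid_pos_top_pos(2)[of 0] unfolding returns_def by (simp add: min_def)
  finally have P0: "?P 0" using hist_m[of 0] by simp
  have "take (Suc F) (top_pos N) = take F (top_pos m) @ [top_pos m ! F - 1]"
    using toppath_pop_d[OF proper_stack_at[of m] _ pop] Fd mN unfolding top_pos_def by simp
  then have not_Pm: "\<not> ?P m"
    using hist_refl[of m] take_Suc_decr_neq[of F "top_pos m"] valid_pos_top_pos(2)[of m]
      top_pos_nth_gt_0[of m F] Fd mN by simp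
  obtain s where s: "s \<le> m" "?P s" and later: "\<And>i. s < i \<Longrightarrow> i \<le> m \<Longrightarrow> \<not> ?P i"
    using nat_last_index[of ?P 0 m, OF P0] by blast
  have sm: "s < m" using s not_Pm le_neq_implies_less by blast
  have "\<forall>i. s < i \<longrightarrow> i \<le> m \<longrightarrow> \<not> ?P i" using later by blast
  moreover have "substack (stack m) (take (Suc F) (top_pos N)) = substack (stack N) (take (Suc F) (top_pos N))"
    using substack_pop_d[OF proper_stack_at[of m] _ pop valid_pos_top_pos(1)[of N], of F] Fd mN by simp
  ultimately have "hist (Suc s) m (top_pos N) = top_pos s"
    using hist_after_exposure_eq_top_pos[OF sm _ _ Fd(2) vN s(2)] mN by simp
  then have "hist s N (top_pos N) = top_pos s"
    using hist_m[of s] hist_Suc[of s m] hist_step_toppath[OF step_at[of s]] sm mN by (simp add: stack_nth toppath_stack)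
  moreover have "s < N" using sm mN by simp
  ultimately show False using h unfolding returns_def by auto
qed

lemma returns_last_step:
  assumes r: "1 \<le> r" "r \<le> n" and h: "returns r 0 N"
  shows "returns r (N - 1) N"
proof -
  define m where "m = N - 1"
  have "1 \<le> N" using returns_less[OF h _ _ r] by simp
  then have mN: "Suc m = N" "m < N" using m_def by auto
  have ne: "take (Suc (n - r)) (hist m N (top_pos N)) \<noteq> take (Suc (n - r)) (top_pos m)"
    using h mN unfolding returns_def by simp
  have hm: "hist m N (top_pos N) = hist_step n \<delta> (R ! m) (R ! Suc m) (top_pos N)"
    using hist_Suc[of m N] hist_refl[of N] mN by simp
  have "take (Suc (n - r)) (hist m N (top_pos N)) = take (n - r) (top_pos m) @ [top_pos m ! (n - r) - 1]"
    using step_at[OF mN(2)]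
  proof (cases rule: dpda_step_cases)
    case rd
    then show ?thesis using ne hm mN by (simp add: stack_nth top_pos_def)
  next
    case (ps q k g)
    have "hist m N (top_pos N) = top_pos m"
      using hm hist_step_push_toppath[OF step_at[OF mN(2)] ps(1)] mN by (simp add: stack_nth toppath_stack)
    then show ?thesis using ne by simp
  next
    case (pp q k)
    have pop: "pop_d (n - k) (stack m) = Some (stack N)" using pp(4) mN by (simp add: stack_nth)
    have hN: "hist m N (top_pos N) = top_pos N" using hm pp(5) by (simp add: stack_nth)
    have top: "take (Suc (n - k)) (top_pos N) = take (n - k) (top_pos m) @ [top_pos m ! (n - k) - 1]"
      using toppath_pop_d[OF proper_stack_at[of m] _ pop] pp mN unfolding top_pos_def by simp
    consider "r < k" | "k = r" | "k < r" by linarith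
    then show ?thesis
    proof cases
      case 1
      then have False using return_not_ending_with_higher_pop[OF r h, of q k] pp(1) unfolding m_def by blast
      then show ?thesis ..
    next
      case 2
      then show ?thesis using hN top by simp
    next
      case 3
      then have d: "Suc (n - r) \<le> n - k" using r by simp
      then have "take (Suc (n - r)) (top_pos N) = take (Suc (n - r)) (take (Suc (n - k)) (top_pos N))"
        by (simp add: min_def)
      also have "\<dots> = take (Suc (n - r)) (top_pos m)"
        using top d valid_pos_top_pos(2)[of m] mN by (simp add: min_def, linarith)
      finally show ?thesis using ne hN by simp
    qed
  qed
  then show ?thesis using returns_from_target[OF r] mN unfolding m_def by simp
qed

text \<open>Splitting, \<open>k = r\<close>: cut at the first configuration \<open>j \<ge> 1\<close> from which the rest of the run is
  itself an \<open>r\<close>-return (the last configuration before \<open>N\<close> is one such). Up to \<open>j\<close> the history of the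
  final top stays one below that of \<open>top_pos j\<close> in coordinate \<open>d\<close>, which makes \<open>R[1, j]\<close> an
  \<open>r\<close>-return for the \<open>(r - 1)\<close>-stack pushed by the first step.\<close>

context
  fixes r q g d
  assumes r: "1 \<le> r" "r \<le> n" and push: "trans_at \<delta> (R ! 0) = Some (Op q (Push r g))"
    and h: "returns r 0 N" and d: "d = n - r"
begin

lemma same_bounds: "2 \<le> N" "d < n"
proof -
  have N1: "1 \<le> N" using returns_less[OF h _ _ r] by simp
  show "d < n" using r d by simp
  show "2 \<le> N"
  proof (rule ccontr)
    assume "\<not> 2 \<le> N"
    then have "N = 1" using N1 by simp
    then have "hist 0 N (top_pos N) = top_pos 0"
      using hist_0_N[OF N1] hist_refl[of 1] hist_step_push_toppath[OF first_step[OF N1] push]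
      by (simp add: stack_nth toppath_stack)
    then show False using h returns_target_not_top[of 0 r "top_pos 0"] r unfolding returns_def by simp
  qed
qed

lemma same_first_step: "hist 0 N (top_pos N) = hist 1 N (top_pos N)"
proof -
  have N1: "1 \<le> N" using same_bounds by simp
  have "take (Suc d) (hist 1 N (top_pos N)) \<noteq> take (Suc d) (top_pos 1)"
    using h same_bounds unfolding returns_def d by simp
  then show ?thesis using hist_0_N[OF N1] first_step_push(4)[OF N1 push] d by simp
qed

context
  fixes j
  assumes j: "1 \<le> j" "j < N" and ret_j: "returns r j N"
    and first: "\<And>i. 1 \<le> i \<Longrightarrow> i < j \<Longrightarrow> \<not> returns r i N"
begin

lemma same_successor:
  assumes a: "1 \<le> a" "a \<le> j"
  shows "take d (hist a j (top_pos j)) = take d (hist a N (top_pos N)) \<and>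
    hist a j (top_pos j) ! d = hist a N (top_pos N) ! d + 1"
proof -
  let ?hj = "hist j N (top_pos N)"
  have l: "length ?hj = n" "length (top_pos j) = n" using length_hist valid_pos_top_pos j by auto
  have "\<forall>i<d. ?hj ! i = top_pos j ! i" "?hj ! d = top_pos j ! d - 1"
    using ret_j take_Suc_eq_snoc_iff[of d ?hj "top_pos j" "top_pos j ! d - 1"] l same_bounds
    unfolding returns_def d by auto
  moreover have "0 < ?hj ! d"
    using valid_pos_nth_gt_0[OF valid_pos_hist[of j N]] valid_pos_top_pos l same_bounds j by simp
  ultimately have tk: "take d (top_pos j) = take d ?hj" and ix: "top_pos j ! d = ?hj ! d + 1"
    using take_eq_take_iff_nth[of d "top_pos j" ?hj] l same_bounds by auto
  have hh: "hist i j ?hj = hist i N (top_pos N)" if "i \<le> j" for i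
    using hist_trans[of i j N] that j by simp
  have "\<forall>i. a \<le> i \<longrightarrow> i < j \<longrightarrow> take (Suc d) (hist i j ?hj) \<noteq> take (Suc d) (top_pos i)"
    using h hh a j unfolding returns_def d by auto
  from hist_successor[OF a(2) _ same_bounds(2) valid_pos_top_pos(1)[of j] valid_pos_hist tk ix this] a j
  show ?thesis using hh[of a] valid_pos_top_pos by simp
qed

lemma same_returns_head: "returns r 1 j"
proof -
  let ?G = "hist 1 j (top_pos j)" and ?h0 = "hist 0 N (top_pos N)"
  note push = first_step_push[OF _ push]
  have N1: "1 \<le> N" using j by simp
  have l: "length ?G = n" "length ?h0 = n" "length (top_pos 0) = n" "length (top_pos 1) = n"
    using length_hist valid_pos_top_pos j by auto
  have h0: "\<forall>i<d. ?h0 ! i = top_pos 0 ! i" "?h0 ! d = top_pos 0 ! d - 1" "2 \<le> top_pos 0 ! d"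
    using h take_Suc_eq_snoc_iff[of d ?h0 "top_pos 0" "top_pos 0 ! d - 1"] l same_bounds
    unfolding returns_def d by auto
  have succ: "take d ?G = take d ?h0" "?G ! d = ?h0 ! d + 1"
    using same_successor[of 1] same_first_step j by auto
  have "\<forall>i<d. ?G ! i = top_pos 1 ! i"
    using succ(1) h0(1) push(5)[OF N1] take_eq_take_iff_nth[of d ?G ?h0] l same_bounds d by auto
  moreover have "?G ! d = top_pos 1 ! d - 1"
    using succ(2) h0(2,3) push(6)[OF N1] d by simp
  ultimately have "take (Suc (n - r)) ?G = take (n - r) (top_pos 1) @ [top_pos 1 ! (n - r) - 1]"
    using take_Suc_eq_snoc_iff[of d ?G "top_pos 1" "top_pos 1 ! d - 1"] l same_bounds d by simp
  moreover have "take (Suc (n - r)) (hist i j (top_pos j)) \<noteq> take (Suc (n - r)) (top_pos i)"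
    if i: "1 \<le> i" "i < j" for i
  proof
    let ?Gi = "hist i j (top_pos j)" and ?hi = "hist i N (top_pos N)"
    assume "take (Suc (n - r)) ?Gi = take (Suc (n - r)) (top_pos i)"
    then have "take d ?Gi = take d (top_pos i)" "?Gi ! d = top_pos i ! d"
      using length_hist[of i j] valid_pos_top_pos(1)[of j] valid_pos_top_pos(2)[of i] i j same_bounds d
      by (auto simp: take_Suc_conv_app_nth)
    then have "take (Suc (n - r)) ?hi = take (n - r) (top_pos i) @ [top_pos i ! (n - r) - 1]"
      using same_successor[of i] i length_hist[of i N] valid_pos_top_pos(1)[of N] valid_pos_top_pos(2)[of i] j
        same_bounds d by (simp add: take_Suc_conv_app_nth)
    moreover have "\<forall>i'. i < i' \<longrightarrow> i' < N \<longrightarrow>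
        take (Suc (n - r)) (hist i' N (top_pos N)) \<noteq> take (Suc (n - r)) (top_pos i')"
      using h unfolding returns_def by auto
    ultimately have "returns r i N" using returns_from_target[OF r, of i N] i j by simp
    then show False using first i by simp
  qed
  moreover have "2 \<le> top_pos 1 ! (n - r)" using push(6)[OF N1] h0(3) d by simp
  ultimately show ?thesis unfolding returns_def by blast
qed

end

lemma returns_push_same_split: "\<exists>j. 1 \<le> j \<and> j \<le> N \<and> returns r 1 j \<and> returns r j N"
proof -
  have "returns r (N - 1) N" "1 \<le> N - 1" using returns_last_step[OF r h] same_bounds by auto
  then obtain j where j: "1 \<le> j" "j \<le> N - 1" "returns r j N"
    and first: "\<And>i. 1 \<le> i \<Longrightarrow> i < j \<Longrightarrow> \<not> returns r i N"
    using nat_first_index[of "\<lambda>i. returns r i N" "N - 1" 1] by blast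
  then have "j < N" using same_bounds by simp
  then show ?thesis using same_returns_head[of j] j first by auto
qed

end

section \<open>The decomposition\<close>

lemma returns_first_step_cases:
  assumes r: "1 \<le> r" "r \<le> n" and h: "returns r 0 N"
  shows "(N = 1 \<and> performs \<delta> (R ! 0) (Pop r))
   \<or> (1 \<le> N \<and> (is_read \<delta> (R ! 0) \<or> (\<exists>k < r. performs \<delta> (R ! 0) (Pop k))
         \<or> (\<exists>k g. k \<noteq> r \<and> performs \<delta> (R ! 0) (Push k g))) \<and> returns r 1 N)
   \<or> (1 \<le> N \<and> (\<exists>k g. r \<le> k \<and> performs \<delta> (R ! 0) (Push k g) \<and>
        (\<exists>j. 1 \<le> j \<and> j \<le> N \<and> returns k 1 j \<and> returns r j N)))"
proof -
  have N1: "1 \<le> N" using returns_less[OF h _ _ r] by simp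
  show ?thesis
    using first_step[OF N1]
  proof (cases rule: dpda_step_cases)
    case (rd f)
    then show ?thesis using returns_read_iff[OF r N1 rd(1)] h N1 unfolding is_read_def by auto
  next
    case (pp q k)
    then consider "k < r" | "k = r" | "r < k" by linarith
    then show ?thesis
    proof cases
      case 1
      then show ?thesis using returns_pop_lower_iff[OF r N1 pp(1)] h N1 pp(1) unfolding performs_def by auto
    next
      case 2
      then show ?thesis using returns_pop_same_imp_single[OF r N1 _ h] pp(1) unfolding performs_def by auto
    next
      case 3
      then show ?thesis using not_returns_pop_higher[OF r N1 pp(1)] h by simp
    qed
  next
    case (ps q k g)
    then consider "k < r" | "k = r" | "r < k" by linarith
    then show ?thesis
    proof cases
      case 1
      then show ?thesis using returns_push_lower_iff[OF r N1 ps(1)] h N1 ps(1) unfolding performs_def by auto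
    next
      case 2
      then show ?thesis using returns_push_same_split[OF r _ h refl] ps(1) N1 unfolding performs_def by auto
    next
      case 3
      then show ?thesis using returns_push_higher_split[OF r ps(1) 3 h refl refl] ps(1) N1
        unfolding performs_def by (auto intro: less_imp_le)
    qed
  qed
qed

lemma returns_of_first_step:
  assumes r: "1 \<le> r" "r \<le> n"
    and cases: "(N = 1 \<and> performs \<delta> (R ! 0) (Pop r))
   \<or> (1 \<le> N \<and> (is_read \<delta> (R ! 0) \<or> (\<exists>k < r. performs \<delta> (R ! 0) (Pop k))
         \<or> (\<exists>k g. k \<noteq> r \<and> performs \<delta> (R ! 0) (Push k g))) \<and> returns r 1 N)
   \<or> (1 \<le> N \<and> (\<exists>k g. r \<le> k \<and> performs \<delta> (R ! 0) (Push k g) \<and>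
        (\<exists>j. 1 \<le> j \<and> j \<le> N \<and> returns k 1 j \<and> returns r j N)))"
  shows "returns r 0 N"
  using cases unfolding performs_def is_read_def
proof (elim disjE conjE exE)
  fix q assume "N = 1" "trans_at \<delta> (R ! 0) = Some (Op q (Pop r))"
  then show ?thesis using returns_single_pop[OF r] by simp
next
  fix f assume "1 \<le> N" "trans_at \<delta> (R ! 0) = Some (Read f)" "returns r 1 N"
  then show ?thesis using returns_read_iff[OF r] by simp
next
  fix k q assume "1 \<le> N" "k < r" "trans_at \<delta> (R ! 0) = Some (Op q (Pop k))" "returns r 1 N"
  then show ?thesis using returns_pop_lower_iff[OF r] by simp
next
  fix k g q assume N1: "1 \<le> N" and "k \<noteq> r" and t: "trans_at \<delta> (R ! 0) = Some (Op q (Push k g))"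
    and "returns r 1 N"
  then consider "k < r" | "r < k" by linarith
  then show ?thesis
    using returns_push_lower_iff[OF r N1 t] returns_push_higher_if_tail[OF r N1 t] \<open>returns r 1 N\<close>
    by cases simp_all
next
  fix k g q j assume "r \<le> k" "trans_at \<delta> (R ! 0) = Some (Op q (Push k g))"
    "1 \<le> j" "j \<le> N" "returns k 1 j" "returns r j N"
  then show ?thesis using returns_push_compose[OF _ _ _ _ refl r _ _ refl] by blast
qed

lemma is_return_iff_returns: "1 \<le> r \<Longrightarrow> r \<le> n \<Longrightarrow> is_return n \<delta> r R \<longleftrightarrow> returns r 0 N"
  using is_return_seg_iff[of 0 N r] length_R unfolding seg_def by simp

lemma is_return_tail_iff_returns:
  "1 \<le> N \<Longrightarrow> 1 \<le> r \<Longrightarrow> r \<le> n \<Longrightarrow> is_return n \<delta> r (drop 1 R) \<longleftrightarrow> returns r 1 N"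
  using is_return_seg_iff[of 1 N r] length_R unfolding seg_def by simp

lemma seg_split:
  assumes j: "1 \<le> j" "j \<le> N"
  shows "drop 1 R = seg 1 j @ tl (seg j N)" "last (seg 1 j) = hd (seg j N)"
proof -
  have "seg 1 j = take j (drop 1 R)" "seg j N = drop j R" "tl (drop j R) = drop j (drop 1 R)"
    unfolding seg_def using length_R j by (simp_all add: drop_Suc tl_drop)
  then show "drop 1 R = seg 1 j @ tl (seg j N)" using append_take_drop_id[of j "drop 1 R"] by simp
  show "last (seg 1 j) = hd (seg j N)" using seg_last[of 1 j] seg_hd[of j N] j by simp
qed

lemma seg_split_unique:
  assumes S: "S \<noteq> []" and T: "T \<noteq> []" and l: "last S = hd T" and d: "drop 1 R = S @ tl T"
  obtains j where "1 \<le> j" "j \<le> N" "S = seg 1 j" "T = seg j N"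
proof -
  define j where "j = length S"
  have j: "1 \<le> j" "j \<le> N"
    using S arg_cong[OF d, of length] unfolding j_def by (auto simp: Suc_le_eq)
  have S1: "S = seg 1 j" using d j_def unfolding seg_def by simp
  have "hd T = S ! (j - 1)" using S l j_def by (simp add: last_conv_nth)
  also have "\<dots> = (S @ tl T) ! (j - 1)"
    using nth_append_left[of "j - 1" S "tl T"] j j_def by simp
  also have "\<dots> = drop 1 R ! (j - 1)" using d by simp
  also have "\<dots> = R ! j" using j length_R by simp
  finally have "hd T = R ! j" .
  moreover have "tl T = drop j (drop 1 R)" using d j_def by simp
  ultimately have "T = R ! j # drop j (drop 1 R)" using T by (metis list.collapse)
  also have "\<dots> = seg j N" unfolding seg_def using length_R j by (simp add: Cons_nth_drop_Suc)
  finally show ?thesis using that j S1 by blast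
qed

lemma decomposition_iff_returns:
  assumes k: "1 \<le> k" "k \<le> n" and r: "1 \<le> r" "r \<le> n"
  shows "(\<exists>S T. is_run n \<delta> S \<and> is_run n \<delta> T \<and> last S = hd T \<and> drop 1 R = S @ tl T \<and>
            is_return n \<delta> k S \<and> is_return n \<delta> r T) \<longleftrightarrow>
         (\<exists>j. 1 \<le> j \<and> j \<le> N \<and> returns k 1 j \<and> returns r j N)"
proof
  assume "\<exists>S T. is_run n \<delta> S \<and> is_run n \<delta> T \<and> last S = hd T \<and> drop 1 R = S @ tl T \<and>
            is_return n \<delta> k S \<and> is_return n \<delta> r T"
  then obtain S T where ST: "is_run n \<delta> S" "is_run n \<delta> T" "last S = hd T" "drop 1 R = S @ tl T"
    "is_return n \<delta> k S" "is_return n \<delta> r T" by blast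
  obtain j where "1 \<le> j" "j \<le> N" "S = seg 1 j" "T = seg j N"
    using seg_split_unique[OF _ _ ST(3,4)] ST(1,2) unfolding is_run_def by blast
  then show "\<exists>j. 1 \<le> j \<and> j \<le> N \<and> returns k 1 j \<and> returns r j N"
    using ST(5,6) is_return_seg_iff[of 1 j k] is_return_seg_iff[of j N r] k r by auto
next
  assume "\<exists>j. 1 \<le> j \<and> j \<le> N \<and> returns k 1 j \<and> returns r j N"
  then obtain j where j: "1 \<le> j" "j \<le> N" and ret: "returns k 1 j" "returns r j N" by blast
  have "is_run n \<delta> (seg 1 j)" "is_run n \<delta> (seg j N)" using seg_run j by auto
  moreover have "is_return n \<delta> k (seg 1 j)" "is_return n \<delta> r (seg j N)"
    using is_return_seg_iff[of 1 j k] is_return_seg_iff[of j N r] ret j k r by auto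
  ultimately show "\<exists>S T. is_run n \<delta> S \<and> is_run n \<delta> T \<and> last S = hd T \<and> drop 1 R = S @ tl T \<and>
            is_return n \<delta> k S \<and> is_return n \<delta> r T"
    using seg_split[OF j] by blast
qed

lemma push_split_iff_returns:
  assumes r: "1 \<le> r" "r \<le> n"
  shows "(\<exists>k g. r \<le> k \<and> performs \<delta> (R ! 0) (Push k g) \<and>
        (\<exists>S T. is_run n \<delta> S \<and> is_run n \<delta> T \<and> last S = hd T \<and> drop 1 R = S @ tl T \<and>
               is_return n \<delta> k S \<and> is_return n \<delta> r T)) \<longleftrightarrow>
      (\<exists>k g. r \<le> k \<and> performs \<delta> (R ! 0) (Push k g) \<and>
        (\<exists>j. 1 \<le> j \<and> j \<le> N \<and> returns k 1 j \<and> returns r j N))"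
proof -
  have "(\<exists>S T. is_run n \<delta> S \<and> is_run n \<delta> T \<and> last S = hd T \<and> drop 1 R = S @ tl T \<and>
             is_return n \<delta> k S \<and> is_return n \<delta> r T) \<longleftrightarrow>
        (\<exists>j. 1 \<le> j \<and> j \<le> N \<and> returns k 1 j \<and> returns r j N)"
    if "performs \<delta> (R ! 0) (Push k g)" for k g
    using decomposition_iff_returns[OF _ _ r] performs_order[OF dp that] by simp
  then show ?thesis by blast
qed
end

theorem mainTheorem11:
  fixes n r :: nat
    and \<delta> :: "('q::finite, 'g::finite, 'a::finite) delta"
    and R :: "('q, 'g) config list"
  assumes "is_dpda n \<delta>" and "1 \<le> r" and "r \<le> n" and "is_run n \<delta> R"
  shows "is_return n \<delta> r R \<longleftrightarrow>
     (length R = 2 \<and> performs \<delta> (R ! 0) (Pop r))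
   \<or> (2 \<le> length R \<and>
        (is_read \<delta> (R ! 0) \<or> (\<exists>k < r. performs \<delta> (R ! 0) (Pop k))
         \<or> (\<exists>k g. k \<noteq> r \<and> performs \<delta> (R ! 0) (Push k g)))
        \<and> is_return n \<delta> r (drop 1 R))
   \<or> (2 \<le> length R \<and> (\<exists>k g. r \<le> k \<and> performs \<delta> (R ! 0) (Push k g) \<and>
        (\<exists>S T. is_run n \<delta> S \<and> is_run n \<delta> T \<and> last S = hd T \<and> drop 1 R = S @ tl T \<and>
               is_return n \<delta> k S \<and> is_return n \<delta> r T)))"
proof -
  interpret dpda_run n \<delta> R using assms(1,4) by unfold_locales
  have len: "length R = 2 \<longleftrightarrow> N = 1" "2 \<le> length R \<longleftrightarrow> 1 \<le> N" using length_R by auto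
  show ?thesis
  proof (cases "1 \<le> N")
    case True
    show ?thesis
      unfolding is_return_iff_returns[OF assms(2,3)] len is_return_tail_iff_returns[OF True assms(2,3)]
        push_split_iff_returns[OF assms(2,3)]
      using returns_first_step_cases[OF assms(2,3)] returns_of_first_step[OF assms(2,3)] by blast
  next
    case False
    then show ?thesis
      using is_return_iff_returns[OF assms(2,3)] len returns_less[of r 0 N] assms(2,3) by auto
  qed
qed

end
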